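(* Let $\boldsymbol{x}$ be a random vector in $\mathbb{R}^n$ with $\mathbb{E}\|\boldsymbol{x}\|^2<\infty$ and let $\boldsymbol{A}\in\mathbb{R}^{m\times n}$ be a random matrix independent of $\boldsymbol{x}$, with $\mathbb{E}\|\boldsymbol{A}^\top\boldsymbol{A}\|<\infty$; measurements are noiseless, $\boldsymbol{y}=\boldsymbol{A}\boldsymbol{x}$. Let a random subset $S$ of the row indices $\{1,\dots,m\}$ be drawn from a distribution depending only on $\boldsymbol{A}$ (conditionally independent of $\boldsymbol{x}$ given $\boldsymbol{A}$), and set $\boldsymbol{A}_1=$ rows of $\boldsymbol{A}$ indexed by $S$, $\boldsymbol{y}_1=\boldsymbol{A}_1\boldsymbol{x}$ (rows of $\boldsymbol{y}$ indexed by $S$). For a measurable $f(\boldsymbol{y}_1,\boldsymbol{A}_1)\in\mathbb{R}^n$ with the relevant second moments finite, define $$\mathcal{L}_{\mathrm{MSPLIT}}(\boldsymbol{y},\boldsymbol{A},f)=\mathbb{E}_{\boldsymbol{y}_1,\boldsymbol{A}_1|\boldsymbol{y},\boldsymbol{A}}\Big[\tfrac1m\|\boldsymbol{A}f(\boldsymbol{y}_1,\boldsymbol{A}_1)-\boldsymbol{y}\|^2\Big],\qquad \boldsymbol{Q}_{\boldsymbol{A}_1}=\mathbb{E}_{\boldsymbol{A}|\boldsymbol{A}_1}[\boldsymbol{A}^\top\boldsymbol{A}].$$ Then $$\mathbb{E}_{\boldsymbol{y},\boldsymbol{A}}\big[\mathcal{L}_{\mathrm{MSPLIT}}(\boldsymbol{y},\boldsymbol{A},f)\big]=\mathbb{E}_{\boldsymbol{y}_1,\boldsymbol{A}_1,\boldsymbol{x}}\Big[\tfrac1m\big(f(\boldsymbol{y}_1,\boldsymbol{A}_1)-\boldsymbol{x}\big)^\top\boldsymbol{Q}_{\boldsymbol{A}_1}\big(f(\boldsymbol{y}_1,\boldsymbol{A}_1)-\boldsymbol{x}\big)\Big],$$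 and the global minimizers of this expected loss are exactly the functions of the form $$f^*(\boldsymbol{y}_1,\boldsymbol{A}_1)=\boldsymbol{Q}_{\boldsymbol{A}_1}^\dagger\boldsymbol{Q}_{\boldsymbol{A}_1}\mathbb{E}[\boldsymbol{x}\mid\boldsymbol{y}_1,\boldsymbol{A}_1]+(\boldsymbol{I}-\boldsymbol{Q}_{\boldsymbol{A}_1}^\dagger\boldsymbol{Q}_{\boldsymbol{A}_1})v(\boldsymbol{y}_1,\boldsymbol{A}_1)$$ (almost surely) for an arbitrary function $v$. In particular, if $\boldsymbol{Q}_{\boldsymbol{A}_1}$ is invertible almost surely, the unique minimizer is $\mathbb{E}[\boldsymbol{x}\mid\boldsymbol{y}_1,\boldsymbol{A}_1]$.
   Context: $\boldsymbol{Q}^\dagger$ denotes the Moore–Penrose pseudo-inverse; $\boldsymbol{Q}^\dagger\boldsymbol{Q}$ is the orthogonal projection onto the range of the symmetric matrix $\boldsymbol{Q}$. $\mathbb{E}_{\boldsymbol{u}|\boldsymbol{v}}$ denotes conditional expectation given $\boldsymbol{v}$. *)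

theory Defs
  imports "HOL-Probability.Probability"
begin

definition mp_pinv :: "real^'n^'n \<Rightarrow> real^'n^'n" where
  "mp_pinv Q = (THE B. Q ** B ** Q = Q \<and> B ** Q ** B = B \<and>
                        transpose (Q ** B) = Q ** B \<and> transpose (B ** Q) = B ** Q)"

definition gen_sigma :: "'w measure \<Rightarrow> ('w \<Rightarrow> 'a) \<Rightarrow> 'a measure \<Rightarrow> 'w measure" where
  "gen_sigma M X N = vimage_algebra (space M) X N"

definition vcond_exp :: "'w measure \<Rightarrow> 'w measure \<Rightarrow> ('w \<Rightarrow> real^'n) \<Rightarrow> 'w \<Rightarrow> real^'n" where
  "vcond_exp M F X = (\<lambda>\<omega>. \<chi> i. real_cond_exp M F (\<lambda>\<omega>'. X \<omega>' $ i) \<omega>)"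

definition mcond_exp :: "'w measure \<Rightarrow> 'w measure \<Rightarrow> ('w \<Rightarrow> real^'n^'k) \<Rightarrow> 'w \<Rightarrow> real^'n^'k" where
  "mcond_exp M F X = (\<lambda>\<omega>. \<chi> i j. real_cond_exp M F (\<lambda>\<omega>'. X \<omega>' $ i $ j) \<omega>)"

definition cond_indep :: "'w measure \<Rightarrow> ('w \<Rightarrow> 'a) \<Rightarrow> 'a measure \<Rightarrow> ('w \<Rightarrow> 'b) \<Rightarrow> 'b measure
     \<Rightarrow> 'w measure \<Rightarrow> bool" where
  "cond_indep M X MX Y MY F \<longleftrightarrow>
     (\<forall>B\<in>sets MX. \<forall>C\<in>sets MY. AE \<omega> in M.
        real_cond_exp M F (\<lambda>\<omega>'. indicator B (X \<omega>') * indicator C (Y \<omega>')) \<omega>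
        = real_cond_exp M F (\<lambda>\<omega>'. indicator B (X \<omega>')) \<omega> *
          real_cond_exp M F (\<lambda>\<omega>'. indicator C (Y \<omega>')) \<omega>)"

definition indep_rv :: "'w measure \<Rightarrow> ('w \<Rightarrow> 'a) \<Rightarrow> 'a measure \<Rightarrow> ('w \<Rightarrow> 'b) \<Rightarrow> 'b measure \<Rightarrow> bool" where
  "indep_rv M X MX Y MY \<longleftrightarrow>
     (\<forall>B\<in>sets MX. \<forall>C\<in>sets MY.
        measure M ({\<omega>\<in>space M. X \<omega> \<in> B} \<inter> {\<omega>\<in>space M. Y \<omega> \<in> C})
        = measure M {\<omega>\<in>space M. X \<omega> \<in> B} * measure M {\<omega>\<in>space M. Y \<omega> \<in> C})"

definition row_select :: "'m set \<Rightarrow> 'a::zero^'m \<Rightarrow> 'a^'m" where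
  "row_select S v = (\<chi> i. if i \<in> S then v $ i else 0)"

definition obs_space :: "('m::finite set \<times> ((real^'m) \<times> (real^'n^'m))) measure" where
  "obs_space = count_space UNIV \<Otimes>\<^sub>M borel"

definition obs :: "('w \<Rightarrow> real^'n) \<Rightarrow> ('w \<Rightarrow> real^'n^'m) \<Rightarrow> ('w \<Rightarrow> 'm set) \<Rightarrow> 'w
    \<Rightarrow> 'm set \<times> ((real^'m) \<times> (real^'n^'m))" where
  "obs x A S = (\<lambda>\<omega>. (S \<omega>, row_select (S \<omega>) (A \<omega> *v x \<omega>), row_select (S \<omega>) (A \<omega>)))"

text \<open>sigma(A_1) (with the index set S), sigma(y_1, A_1), sigma(y, A).\<close>
definition F_A1 :: "'w measure \<Rightarrow> ('w \<Rightarrow> real^'n^'m) \<Rightarrow> ('w \<Rightarrow> 'm::finite set) \<Rightarrow> 'w measure" where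
  "F_A1 M A S = gen_sigma M (\<lambda>\<omega>. (S \<omega>, row_select (S \<omega>) (A \<omega>))) (count_space UNIV \<Otimes>\<^sub>M borel)"

definition F_obs :: "'w measure \<Rightarrow> ('w \<Rightarrow> real^'n) \<Rightarrow> ('w \<Rightarrow> real^'n^'m) \<Rightarrow> ('w \<Rightarrow> 'm::finite set) \<Rightarrow> 'w measure" where
  "F_obs M x A S = gen_sigma M (obs x A S) obs_space"

definition F_yA :: "'w measure \<Rightarrow> ('w \<Rightarrow> real^'n) \<Rightarrow> ('w \<Rightarrow> real^'n^'m) \<Rightarrow> 'w measure" where
  "F_yA M x A = gen_sigma M (\<lambda>\<omega>. (A \<omega> *v x \<omega>, A \<omega>)) borel"

definition Qmat :: "'w measure \<Rightarrow> ('w \<Rightarrow> real^'n^'m) \<Rightarrow> ('w \<Rightarrow> 'm::finite set) \<Rightarrow> 'w \<Rightarrow> real^'n^'n" where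
  "Qmat M A S = mcond_exp M (F_A1 M A S) (\<lambda>\<omega>. transpose (A \<omega>) ** A \<omega>)"

definition msplit_loss :: "'w measure \<Rightarrow> ('w \<Rightarrow> real^'n) \<Rightarrow> ('w \<Rightarrow> real^'n^'m) \<Rightarrow> ('w \<Rightarrow> 'm::finite set)
    \<Rightarrow> ('m set \<times> ((real^'m) \<times> (real^'n^'m)) \<Rightarrow> real^'n) \<Rightarrow> 'w \<Rightarrow> real" where
  "msplit_loss M x A S f = real_cond_exp M (F_yA M x A)
     (\<lambda>\<omega>. (1 / real CARD('m)) * (norm (A \<omega> *v f (obs x A S \<omega>) - A \<omega> *v x \<omega>))\<^sup>2)"

definition exp_msplit_loss :: "'w measure \<Rightarrow> ('w \<Rightarrow> real^'n) \<Rightarrow> ('w \<Rightarrow> real^'n^'m) \<Rightarrow> ('w \<Rightarrow> 'm::finite set)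
    \<Rightarrow> ('m set \<times> ((real^'m) \<times> (real^'n^'m)) \<Rightarrow> real^'n) \<Rightarrow> real" where
  "exp_msplit_loss M x A S f = (\<integral>\<omega>. msplit_loss M x A S f \<omega> \<partial>M)"

definition admissible :: "'w measure \<Rightarrow> ('w \<Rightarrow> real^'n) \<Rightarrow> ('w \<Rightarrow> real^'n^'m) \<Rightarrow> ('w \<Rightarrow> 'm::finite set)
    \<Rightarrow> ('m set \<times> ((real^'m) \<times> (real^'n^'m)) \<Rightarrow> real^'n) \<Rightarrow> bool" where
  "admissible M x A S f \<longleftrightarrow> f \<in> borel_measurable obs_space
     \<and> integrable M (\<lambda>\<omega>. (norm (f (obs x A S \<omega>)))\<^sup>2)
     \<and> integrable M (\<lambda>\<omega>. (norm (A \<omega> *v f (obs x A S \<omega>) - A \<omega> *v x \<omega>))\<^sup>2)"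

definition is_global_minimizer :: "'w measure \<Rightarrow> ('w \<Rightarrow> real^'n) \<Rightarrow> ('w \<Rightarrow> real^'n^'m) \<Rightarrow> ('w \<Rightarrow> 'm::finite set)
    \<Rightarrow> ('m set \<times> ((real^'m) \<times> (real^'n^'m)) \<Rightarrow> real^'n) \<Rightarrow> bool" where
  "is_global_minimizer M x A S f \<longleftrightarrow> admissible M x A S f \<and>
     (\<forall>g. admissible M x A S g \<longrightarrow> exp_msplit_loss M x A S f \<le> exp_msplit_loss M x A S g)"

end

theory Submission
  imports Defs
begin

text \<open>
  Write \<open>A1\<close> for the selected rows \<open>A\<^sub>1\<close> together with the index set \<open>S\<close>, and
  \<open>Q = E[A\<^sup>T A | A1]\<close>. Since \<open>x\<close> is independent of \<open>A\<close> and \<open>S\<close> is conditionally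
  independent of \<open>x\<close> given \<open>A\<close>, the vector \<open>x\<close> is independent of \<open>(A, S)\<close>; hence
  conditioning \<open>A\<^sup>T A\<close> on \<open>x\<close> in addition to \<open>A1\<close> does not change it, and
  \<open>E |A \<phi>|\<^sup>2 = E \<phi>\<^sup>T Q \<phi>\<close> for every function \<open>\<phi>\<close> of \<open>(x, A1)\<close>; in particular
  \<open>Q\<close> is almost surely positive semidefinite. Split the error of an estimator \<open>f\<close> as
  \<open>f(y\<^sub>1, A\<^sub>1) - x = u + r\<close> with \<open>u = f(y\<^sub>1, A\<^sub>1) - x_hat\<close> and \<open>r = x_hat - x\<close>, where
  \<open>x_hat = E[x | y\<^sub>1, A\<^sub>1]\<close>. As \<open>Q u\<close> is a function of the observation, the cross term
  \<open>E u\<^sup>T Q r\<close> vanishes, so the expected loss is \<open>(E u\<^sup>T Q u + E r\<^sup>T Q r) / m\<close>. It is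
  minimal iff \<open>u\<^sup>T Q u = 0\<close>, i.e. \<open>Q u = 0\<close>, almost surely, and for symmetric \<open>Q\<close> the
  solutions of \<open>Q u = 0\<close> are exactly \<open>f = Q\<^sup>\<dagger> Q x_hat + (I - Q\<^sup>\<dagger> Q) v\<close>.
\<close>

lemma measurable_vec_nth [measurable (raw)]:
  fixes f :: "'b \<Rightarrow> 'a::euclidean_space^'n"
  shows "f \<in> borel_measurable M \<Longrightarrow> (\<lambda>\<omega>. f \<omega> $ i) \<in> borel_measurable M"
  using borel_measurable_continuous_onI[OF linear_continuous_on[OF bounded_linear_vec_nth]]
  by (rule measurable_compose[rotated])

lemma borel_measurable_vec_lambda [measurable (raw)]:
  fixes f :: "'n::finite \<Rightarrow> 'b \<Rightarrow> 'a::euclidean_space"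
  assumes "\<And>i. f i \<in> borel_measurable M"
  shows "(\<lambda>\<omega>. \<chi> i. f i \<omega>) \<in> borel_measurable M"
proof (subst borel_measurable_euclidean_space, intro ballI)
  fix b :: "'a^'n" assume "b \<in> Basis"
  then obtain i u where b: "b = axis i u" and "u \<in> Basis" by (auto simp: Basis_vec_def)
  have "(\<lambda>\<omega>. f i \<omega> \<bullet> u) \<in> borel_measurable M"
    using assms[of i] by measurable
  then show "(\<lambda>\<omega>. (\<chi> i. f i \<omega>) \<bullet> b) \<in> borel_measurable M" by (simp add: b inner_axis)
qed

lemma borel_measurable_matrix_vector_mult [measurable (raw)]:
  fixes a :: "'b \<Rightarrow> real^'n^'m" and v :: "'b \<Rightarrow> real^'n"
  assumes "a \<in> borel_measurable M" "v \<in> borel_measurable M"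
  shows "(\<lambda>\<omega>. a \<omega> *v v \<omega>) \<in> borel_measurable M"
  unfolding matrix_vector_mult_def using assms by measurable

lemma borel_measurable_matrix_matrix_mult [measurable (raw)]:
  fixes a :: "'b \<Rightarrow> real^'n^'m" and b :: "'b \<Rightarrow> real^'k^'n"
  assumes "a \<in> borel_measurable M" "b \<in> borel_measurable M"
  shows "(\<lambda>\<omega>. a \<omega> ** b \<omega>) \<in> borel_measurable M"
  unfolding matrix_matrix_mult_def using assms by measurable

lemma borel_measurable_transpose [measurable (raw)]:
  fixes a :: "'b \<Rightarrow> real^'n^'m"
  assumes "a \<in> borel_measurable M"
  shows "(\<lambda>\<omega>. transpose (a \<omega>)) \<in> borel_measurable M"
  unfolding transpose_def using assms by measurable

lemma borel_measurable_row_select [measurable (raw)]: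
  fixes a :: "'b \<Rightarrow> 'a::euclidean_space^'m"
  assumes "a \<in> borel_measurable M" "s \<in> measurable M (count_space UNIV)"
  shows "(\<lambda>\<omega>. row_select (s \<omega>) (a \<omega>)) \<in> borel_measurable M"
proof -
  have "(\<lambda>\<omega>. row_select t (a \<omega>)) \<in> borel_measurable M" for t
    unfolding row_select_def using assms(1) by measurable
  then show ?thesis
    using measurable_compose_countable[where f="\<lambda>t \<omega>. row_select t (a \<omega>)"] assms(2) by blast
qed

lemma row_select_matrix_vector_mult: "row_select s (a *v v) = row_select s a *v v"
  by (simp add: row_select_def vec_eq_iff matrix_vector_mult_def)

section \<open>Sigma-algebras generated by a map\<close>

lemma (in prob_space) sigma_finite_subalgebra_vimage_algebra:
  assumes "X \<in> measurable M N"
  shows "sigma_finite_subalgebra M (vimage_algebra (space M) X N)"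
proof -
  have "subalgebra M (vimage_algebra (space M) X N)"
    unfolding subalgebra_def using assms
    by (auto simp: sets_vimage_algebra2 measurable_space measurable_sets)
  then show ?thesis
    by (intro finite_measure_subalgebra_is_sigma_finite)
       (simp add: finite_measure_subalgebra_def finite_measure_subalgebra_axioms_def finite_measure_axioms)
qed

lemma measurable_vimage_algebra_comp:
  assumes "X \<in> \<Omega> \<rightarrow> space N" "h \<in> measurable N L"
  shows "(\<lambda>\<omega>. h (X \<omega>)) \<in> measurable (vimage_algebra \<Omega> X N) L"
  using measurable_compose[OF measurable_vimage_algebra1[OF assms(1)] assms(2)] .

lemma subalgebra_vimage_algebra_comp:
  assumes X: "X \<in> \<Omega> \<rightarrow> space N" and g: "g \<in> measurable N L"
  shows "subalgebra (vimage_algebra \<Omega> X N) (vimage_algebra \<Omega> (\<lambda>\<omega>. g (X \<omega>)) L)"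
proof -
  have "sets (vimage_algebra \<Omega> (\<lambda>\<omega>. g (X \<omega>)) L) \<subseteq> sets (vimage_algebra \<Omega> X N)"
    by (rule sets_image_in_sets'[OF sets_vimage_algebra_space])
       (use measurable_sets[OF measurable_vimage_algebra_comp[OF X g]] in simp)
  then show ?thesis by (simp add: subalgebra_def)
qed

lemma vimage_algebra_factorization_ennreal:
  fixes f :: "'a \<Rightarrow> ennreal"
  assumes X: "X \<in> \<Omega> \<rightarrow> space N" and f: "f \<in> borel_measurable (vimage_algebra \<Omega> X N)"
  shows "\<exists>h\<in>borel_measurable N. \<forall>\<omega>\<in>\<Omega>. f \<omega> = h (X \<omega>)"
  using f
proof (induct rule: borel_measurable_induct)
  case (cong f g)
  then show ?case by auto
next
  case (set E)
  then obtain B where B: "B \<in> sets N" "E = X -` B \<inter> \<Omega>"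
    using sets_vimage_algebra2[OF X] by auto
  then show ?case
    by (intro bexI[of _ "indicator B"]) (auto simp: indicator_def)
next
  case (mult u c)
  obtain h where "h \<in> borel_measurable N" "\<forall>\<omega>\<in>\<Omega>. u \<omega> = h (X \<omega>)" using mult by blast
  then show ?case by (intro bexI[of _ "\<lambda>z. c * h z"]) auto
next
  case (add u v)
  obtain h where "h \<in> borel_measurable N" "\<forall>\<omega>\<in>\<Omega>. u \<omega> = h (X \<omega>)" using add by blast
  moreover obtain g where "g \<in> borel_measurable N" "\<forall>\<omega>\<in>\<Omega>. v \<omega> = g (X \<omega>)" using add by blast
  ultimately show ?case by (intro bexI[of _ "\<lambda>z. g z + h z"]) auto
next
  case (seq U)
  then obtain h where h: "\<And>i. h i \<in> borel_measurable N" "\<And>i \<omega>. \<omega> \<in> \<Omega> \<Longrightarrow> U i \<omega> = h i (X \<omega>)"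
    by metis
  show ?case
    by (rule bexI[of _ "\<lambda>z. SUP i. h i z"]) (use h in \<open>auto simp: image_comp o_def\<close>)
qed

lemma vimage_algebra_factorization_real:
  fixes f :: "'a \<Rightarrow> real"
  assumes X: "X \<in> \<Omega> \<rightarrow> space N" and f: "f \<in> borel_measurable (vimage_algebra \<Omega> X N)"
  shows "\<exists>h\<in>borel_measurable N. \<forall>\<omega>\<in>\<Omega>. f \<omega> = h (X \<omega>)"
proof -
  obtain hp where hp: "hp \<in> borel_measurable N" "\<forall>\<omega>\<in>\<Omega>. ennreal (f \<omega>) = hp (X \<omega>)"
    using vimage_algebra_factorization_ennreal[OF X, of "\<lambda>\<omega>. ennreal (f \<omega>)"] f by auto
  obtain hn where hn: "hn \<in> borel_measurable N" "\<forall>\<omega>\<in>\<Omega>. ennreal (- f \<omega>) = hn (X \<omega>)"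
    using vimage_algebra_factorization_ennreal[OF X, of "\<lambda>\<omega>. ennreal (- f \<omega>)"] f by auto
  have "f \<omega> = enn2real (hp (X \<omega>)) - enn2real (hn (X \<omega>))" if "\<omega> \<in> \<Omega>" for \<omega>
    using hp(2)[rule_format, OF that, symmetric] hn(2)[rule_format, OF that, symmetric]
    by (cases "f \<omega> \<ge> 0") (auto simp: ennreal_neg)
  then show ?thesis
    by (intro bexI[of _ "\<lambda>z. enn2real (hp z) - enn2real (hn z)"]) (use hp hn in auto)
qed

lemma vimage_algebra_factorization:
  fixes f :: "'a \<Rightarrow> 'b::euclidean_space"
  assumes X: "X \<in> \<Omega> \<rightarrow> space N" and f: "f \<in> borel_measurable (vimage_algebra \<Omega> X N)"
  shows "\<exists>h\<in>borel_measurable N. \<forall>\<omega>\<in>\<Omega>. f \<omega> = h (X \<omega>)"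
proof -
  have "\<forall>b\<in>Basis. \<exists>h\<in>borel_measurable N. \<forall>\<omega>\<in>\<Omega>. f \<omega> \<bullet> b = h (X \<omega>)"
    using f by (intro ballI vimage_algebra_factorization_real[OF X]) (auto intro!: borel_measurable_inner)
  then obtain h where h: "\<And>b. b \<in> Basis \<Longrightarrow> h b \<in> borel_measurable N"
    "\<And>b \<omega>. b \<in> Basis \<Longrightarrow> \<omega> \<in> \<Omega> \<Longrightarrow> f \<omega> \<bullet> b = h b (X \<omega>)"
    by metis
  have "f \<omega> = (\<Sum>b\<in>Basis. h b (X \<omega>) *\<^sub>R b)" if "\<omega> \<in> \<Omega>" for \<omega>
    using euclidean_representation[of "f \<omega>"] h(2)[OF _ that] by simp
  then show ?thesis
    by (intro bexI[of _ "\<lambda>z. \<Sum>b\<in>Basis. h b z *\<^sub>R b"]) (auto intro!: borel_measurable_sum borel_measurable_scaleR h(1))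
qed

section \<open>The Moore--Penrose inverse of a symmetric matrix\<close>

definition penrose_inverse :: "real^'n^'n \<Rightarrow> real^'n^'n \<Rightarrow> bool" where
  "penrose_inverse Q B \<longleftrightarrow> Q ** B ** Q = Q \<and> B ** Q ** B = B \<and>
     transpose (Q ** B) = Q ** B \<and> transpose (B ** Q) = B ** Q"

lemma penrose_inverse_unique:
  assumes "penrose_inverse Q B" "penrose_inverse Q C"
  shows "B = C"
proof -
  let ?T = transpose
  have B1: "Q ** B ** Q = Q" and B2: "B ** Q ** B = B"
    and B3: "?T (Q ** B) = Q ** B" and B4: "?T (B ** Q) = B ** Q"
    using assms(1) by (auto simp: penrose_inverse_def)
  have C1: "Q ** C ** Q = Q" and C2: "C ** Q ** C = C"
    and C3: "?T (Q ** C) = Q ** C" and C4: "?T (C ** Q) = C ** Q"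
    using assms(2) by (auto simp: penrose_inverse_def)
  have TQC: "?T Q = ?T Q ** ?T C ** ?T Q"
    by (metis C1 matrix_transpose_mul matrix_mul_assoc)
  have TQB: "?T Q = ?T Q ** ?T B ** ?T Q"
    by (metis B1 matrix_transpose_mul matrix_mul_assoc)
  have "B = B ** (?T B ** ?T Q)"
    using B2 B3 by (metis matrix_mul_assoc matrix_transpose_mul)
  also have "\<dots> = B ** ((?T B ** ?T Q) ** (?T C ** ?T Q))"
    by (subst TQC) (simp add: matrix_mul_assoc)
  also have "\<dots> = B ** Q ** C"
    using B2 B3 C3 by (metis matrix_mul_assoc matrix_transpose_mul)
  finally have B: "B = B ** Q ** C" .
  have "C = (?T Q ** ?T C) ** C"
    using C2 C4 by (metis matrix_transpose_mul)
  also have "\<dots> = ((?T Q ** ?T B) ** (?T Q ** ?T C)) ** C"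
    by (subst TQB) (simp add: matrix_mul_assoc)
  also have "\<dots> = B ** Q ** C"
    using C2 B4 C4 by (metis matrix_mul_assoc matrix_transpose_mul)
  finally show ?thesis using B by simp
qed

lemma transpose_diff: "transpose (X - Y) = transpose X - transpose (Y::real^'n^'m)"
  by (simp add: vec_eq_iff transpose_def)

lemma matrix_diff_ldistrib: "X ** (Y - Z) = X ** Y - X ** (Z::real^'n^'n)"
  by (simp add: matrix_eq matrix_vector_mul_assoc[symmetric] matrix_vector_mult_diff_rdistrib
      matrix_vector_mult_diff_distrib)

lemma matrix_diff_rdistrib: "(Y - Z) ** X = Y ** X - Z ** (X::real^'n^'n)"
  by (simp add: matrix_eq matrix_vector_mul_assoc[symmetric] matrix_vector_mult_diff_rdistrib)

lemma matrix_add_rdistrib: "(Y + Z) ** X = Y ** X + Z ** (X::real^'n^'n)"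
  by (simp add: matrix_eq matrix_vector_mul_assoc[symmetric] matrix_vector_mult_add_rdistrib)

lemma orthogonal_projection_matrix_exists:
  fixes N :: "(real^'n) set"
  assumes "subspace N"
  obtains P :: "real^'n^'n"
  where "transpose P = P" "P ** P = P" "\<And>v. P *v v \<in> N" "\<And>v. v \<in> N \<Longrightarrow> P *v v = v"
proof -
  obtain Bs where Bs: "Bs \<subseteq> N" "pairwise orthogonal Bs" "\<And>b. b \<in> Bs \<Longrightarrow> norm b = 1"
      "independent Bs" "span Bs = N"
    using orthonormal_basis_subspace[OF assms] by metis
  have fin: "finite Bs" using Bs(4) by (rule finiteI_independent)
  define P :: "real^'n^'n" where "P = (\<chi> i j. \<Sum>b\<in>Bs. b $ i * b $ j)"
  have P_apply: "P *v v = (\<Sum>b\<in>Bs. (b \<bullet> v) *\<^sub>R b)" for v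
    by (simp add: vec_eq_iff P_def matrix_vector_mult_def inner_vec_def sum_component
        sum_distrib_left sum_distrib_right mult_ac sum.swap[of _ Bs])
  have P_basis: "P *v c = c" if "c \<in> Bs" for c
  proof -
    have "(\<Sum>b\<in>Bs. (b \<bullet> c) *\<^sub>R b) = (\<Sum>b\<in>{c}. (b \<bullet> c) *\<^sub>R b)"
      using Bs(2) that by (intro sum.mono_neutral_right[OF fin]) (auto simp: pairwise_def orthogonal_def)
    also have "\<dots> = c" using Bs(3)[OF that] by (simp add: dot_square_norm)
    finally show ?thesis by (simp add: P_apply)
  qed
  have P_fix: "P *v v = v" if "v \<in> N" for v
  proof -
    have "subspace {a. P *v a = a}"
      by (auto simp: subspace_def matrix_vector_right_distrib matrix_vector_mult_scaleR)
    then show ?thesis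
      using span_induct[of v Bs "\<lambda>a. P *v a = a"] that Bs(5) P_basis by auto
  qed
  have P_range: "P *v v \<in> N" for v
    unfolding P_apply Bs(5)[symmetric] by (intro span_sum span_mul span_base)
  show thesis
  proof (rule that)
    show "transpose P = P" by (simp add: vec_eq_iff transpose_def P_def mult.commute)
    show "P ** P = P" by (simp add: matrix_eq matrix_vector_mul_assoc[symmetric] P_fix P_range)
  qed (use P_range P_fix in auto)
qed

text \<open>With \<open>P\<close> the orthogonal projection onto the kernel of \<open>Q\<close>, the matrix \<open>Q + P\<close> is invertible
  and \<open>(Q + P)\<^sup>-\<^sup>1 - P\<close> is the Moore--Penrose inverse of \<open>Q\<close>.\<close>
lemma penrose_inverse_exists:
  fixes Q :: "real^'n^'n"
  assumes sym: "transpose Q = Q"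
  shows "\<exists>B. penrose_inverse Q B"
proof -
  have "subspace {v. Q *v v = 0}"
    by (auto simp: subspace_def matrix_vector_right_distrib matrix_vector_mult_scaleR)
  then obtain P :: "real^'n^'n" where P: "transpose P = P" "P ** P = P"
    "\<And>v. Q *v (P *v v) = 0" "\<And>v. Q *v v = 0 \<Longrightarrow> P *v v = v"
    by (rule orthogonal_projection_matrix_exists) auto
  have QP: "Q ** P = 0" by (simp add: matrix_eq matrix_vector_mul_assoc[symmetric] P(3))
  have "transpose (Q ** P) = P ** Q" by (simp add: matrix_transpose_mul sym P(1))
  then have PQ: "P ** Q = 0" by (simp add: QP transpose_def vec_eq_iff)
  have "v = 0" if "(Q + P) *v v = 0" for v
  proof -
    have "P *v ((Q + P) *v v) = 0" using that by simp
    then have "P *v v = 0"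
      by (simp add: matrix_vector_mult_add_rdistrib matrix_vector_right_distrib
          matrix_vector_mul_assoc PQ P(2))
    moreover from this have "Q *v v = 0" using that by (simp add: matrix_vector_mult_add_rdistrib)
    ultimately show "v = 0" using P(4) by metis
  qed
  then obtain R where R: "R ** (Q + P) = mat 1"
    using matrix_left_invertible_ker by blast
  then have R': "(Q + P) ** R = mat 1" using matrix_left_right_inverse by blast
  have RP: "R ** P = P"
    by (metis R matrix_add_rdistrib QP P(2) add_0 matrix_mul_assoc matrix_mul_lid)
  have PR: "P ** R = P"
    by (metis R' matrix_add_ldistrib PQ P(2) add_0 matrix_mul_assoc matrix_mul_rid)
  define B where "B = R - P"
  have QB: "Q ** B = mat 1 - P"
    using R' by (simp add: B_def matrix_diff_ldistrib matrix_add_rdistrib QP PR algebra_simps)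
  have BQ: "B ** Q = mat 1 - P"
    using R by (simp add: B_def matrix_diff_rdistrib matrix_add_ldistrib PQ RP algebra_simps)
  have PB: "P ** B = 0" by (simp add: B_def matrix_diff_ldistrib PR P(2))
  have "penrose_inverse Q B"
    unfolding penrose_inverse_def
    by (simp add: QB BQ matrix_diff_rdistrib PQ PB transpose_diff P(1) matrix_mul_assoc)
  then show ?thesis by blast
qed

lemma mp_pinv_penrose_inverse:
  assumes "transpose Q = Q"
  shows "penrose_inverse Q (mp_pinv Q)"
proof -
  have "\<exists>!B. penrose_inverse Q B"
    using penrose_inverse_exists[OF assms] penrose_inverse_unique by blast
  then show ?thesis unfolding mp_pinv_def penrose_inverse_def[symmetric] by (rule theI')
qed

lemma mult_mp_pinv_mult_cancel:
  assumes "transpose Q = Q"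
  shows "Q ** mp_pinv Q ** Q = Q"
  using mp_pinv_penrose_inverse[OF assms] by (simp add: penrose_inverse_def)

lemma mp_pinv_invertible:
  assumes "transpose Q = Q" "invertible Q"
  shows "mp_pinv Q ** Q = mat 1"
proof -
  obtain R where R: "R ** Q = mat 1" using assms(2) invertible_left_inverse by blast
  have "R ** (Q ** mp_pinv Q ** Q) = R ** Q" using mult_mp_pinv_mult_cancel[OF assms(1)] by simp
  then show ?thesis by (simp add: matrix_mul_assoc R)
qed

lemma mp_pinv_form_of_kernel:
  assumes "transpose Q = Q" "Q *v (F - y) = 0"
  shows "F = (mp_pinv Q ** Q) *v y + (mat 1 - mp_pinv Q ** Q) *v F"
proof -
  have "(mp_pinv Q ** Q) *v (F - y) = 0"
    using assms(2) by (simp flip: matrix_vector_mul_assoc)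
  then show ?thesis
    by (simp add: matrix_vector_mult_diff_distrib matrix_vector_mult_diff_rdistrib)
qed

lemma kernel_of_mp_pinv_form:
  assumes "transpose Q = Q"
  shows "Q *v ((mp_pinv Q ** Q) *v y + (mat 1 - mp_pinv Q ** Q) *v v - y) = 0"
  using mult_mp_pinv_mult_cancel[OF assms]
  by (simp add: matrix_vector_right_distrib matrix_vector_mult_diff_rdistrib
      matrix_vector_mult_diff_distrib matrix_vector_mul_assoc matrix_mul_assoc)

section \<open>Quadratic forms\<close>

lemma inner_matrix_vector_symmetric:
  assumes "transpose Q = Q"
  shows "a \<bullet> (Q *v b) = (Q *v a) \<bullet> (b::real^'n)"
  by (metis assms dot_lmul_matrix transpose_matrix_vector)

lemma quadratic_form_add:
  assumes "transpose Q = Q"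
  shows "(a + b) \<bullet> (Q *v (a + b)) = a \<bullet> (Q *v a) + 2 * (a \<bullet> (Q *v b)) + b \<bullet> (Q *v (b::real^'n))"
  using inner_matrix_vector_symmetric[OF assms, of b a]
  by (simp add: matrix_vector_right_distrib inner_add_left inner_add_right inner_commute)

lemma quadratic_form_diff:
  assumes "transpose Q = Q"
  shows "(a - b) \<bullet> (Q *v (a - b)) = a \<bullet> (Q *v a) - 2 * (a \<bullet> (Q *v b)) + b \<bullet> (Q *v (b::real^'n))"
  using inner_matrix_vector_symmetric[OF assms, of b a]
  by (simp add: matrix_vector_mult_diff_distrib inner_diff_left inner_diff_right inner_commute)

lemma quadratic_form_diff_alt:
  assumes "transpose Q = Q"
  shows "(a - b) \<bullet> (Q *v (a - b)) = b \<bullet> (Q *v b) - a \<bullet> (Q *v a) + 2 * ((Q *v a) \<bullet> (a - (b::real^'n)))"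
  using inner_matrix_vector_symmetric[OF assms, of a b]
  by (simp add: quadratic_form_diff[OF assms] inner_diff_right inner_commute)

lemma psd_bilinear_form_le:
  assumes "transpose Q = Q" "\<And>v. 0 \<le> v \<bullet> (Q *v v)"
  shows "\<bar>a \<bullet> (Q *v b)\<bar> \<le> (a \<bullet> (Q *v a) + b \<bullet> (Q *v (b::real^'n))) / 2"
  using assms(2)[of "a + b"] assms(2)[of "a - b"]
  unfolding quadratic_form_add[OF assms(1)] quadratic_form_diff[OF assms(1)] by (simp add: abs_le_iff)

text \<open>Expand \<open>0 \<le> (u - t Q u)\<^sup>T Q (u - t Q u) = t\<^sup>2 (Q u)\<^sup>T Q (Q u) - 2 t \<parallel>Q u\<parallel>\<^sup>2\<close> for small \<open>t > 0\<close>.\<close>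
lemma psd_quadratic_form_eq_0_imp:
  assumes "transpose Q = Q" "\<And>v. 0 \<le> v \<bullet> (Q *v v)" and u: "u \<bullet> (Q *v u) = 0"
  shows "Q *v u = (0::real^'n)"
proof (rule ccontr)
  define w where "w = Q *v u"
  define c where "c = w \<bullet> (Q *v w)"
  assume "Q *v u \<noteq> 0"
  then have w: "0 < w \<bullet> w" by (simp add: w_def)
  have c: "0 \<le> c" unfolding c_def by (rule assms(2))
  define t where "t = (w \<bullet> w) / (c + 1)"
  have t: "0 < t" using w c by (simp add: t_def)
  have "0 \<le> (u - t *\<^sub>R w) \<bullet> (Q *v (u - t *\<^sub>R w))" by (rule assms(2))
  also have "\<dots> = t * (t * c - 2 * (w \<bullet> w))"
    using inner_matrix_vector_symmetric[OF assms(1), of u w] u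
    by (simp add: quadratic_form_diff[OF assms(1)] c_def w_def matrix_vector_mult_scaleR algebra_simps)
  finally have "2 * (w \<bullet> w) \<le> t * c" using t by (simp add: zero_le_mult_iff)
  moreover have "t * c < w \<bullet> w" using w c by (simp add: t_def field_simps)
  ultimately show False using w by linarith
qed

lemma inner_matrix_vector_mult_same:
  "(A *v u) \<bullet> (A *v v) = u \<bullet> ((transpose A ** A) *v (v::real^'n))"
  by (metis dot_lmul_matrix matrix_vector_mul_assoc transpose_matrix_vector transpose_transpose)

lemma quadratic_form_expand:
  "u \<bullet> (X *v v) = (\<Sum>i\<in>UNIV. \<Sum>j\<in>UNIV. u $ i * v $ j * X $ i $ j)" for X :: "real^'n^'n"
  by (simp add: inner_vec_def matrix_vector_mult_def sum_distrib_left mult_ac)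

lemma norm_matrix_vector_mult_le:
  "norm (X *v v) \<le> real CARD('m) * real CARD('n) * norm X * norm v" for X :: "real^'n^'m"
proof -
  have "norm (X *v v) \<le> onorm ((*v) X) * norm v" by (rule onorm) simp
  also have "onorm ((*v) X) \<le> real CARD('m) * real CARD('n) * norm X"
    by (rule onorm_le_matrix_component) (meson component_le_norm_cart Finite_Cartesian_Product.norm_nth_le order_trans)
  then have "onorm ((*v) X) * norm v \<le> real CARD('m) * real CARD('n) * norm X * norm v"
    by (rule mult_right_mono) simp
  finally show ?thesis .
qed

lemma power2_norm_diff_le:
  "(norm (a - b))\<^sup>2 \<le> 2 * (norm a)\<^sup>2 + 2 * (norm (b::'a::real_normed_vector))\<^sup>2"
proof -
  have "(norm (a - b))\<^sup>2 \<le> (norm a + norm b)\<^sup>2"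
    by (rule power_mono[OF norm_triangle_ineq4]) simp
  also have "\<dots> \<le> 2 * (norm a)\<^sup>2 + 2 * (norm b)\<^sup>2"
    using zero_le_power2[of "norm a - norm b"] by (simp add: power2_sum power2_diff)
  finally show ?thesis .
qed

lemma integrable_norm_square_diff:
  fixes f g :: "'a \<Rightarrow> 'b::{banach, second_countable_topology}"
  assumes [measurable]: "f \<in> borel_measurable M" "g \<in> borel_measurable M"
    and "integrable M (\<lambda>\<omega>. (norm (f \<omega>))\<^sup>2)" "integrable M (\<lambda>\<omega>. (norm (g \<omega>))\<^sup>2)"
  shows "integrable M (\<lambda>\<omega>. (norm (f \<omega> - g \<omega>))\<^sup>2)"
  by (rule Bochner_Integration.integrable_bound[where f="\<lambda>\<omega>. 2 * (norm (f \<omega>))\<^sup>2 + 2 * (norm (g \<omega>))\<^sup>2"])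
     (use assms power2_norm_diff_le in auto)

lemma integrable_bounded_mult:
  fixes f g :: "'a \<Rightarrow> real"
  assumes "integrable M g" "f \<in> borel_measurable M" "\<And>\<omega>. \<omega> \<in> space M \<Longrightarrow> \<bar>f \<omega>\<bar> \<le> c"
  shows "integrable M (\<lambda>\<omega>. f \<omega> * g \<omega>)"
proof (rule Bochner_Integration.integrable_bound[where f="\<lambda>\<omega>. c * g \<omega>"])
  show "AE \<omega> in M. norm (f \<omega> * g \<omega>) \<le> norm (c * g \<omega>)"
  proof (rule AE_I2)
    fix \<omega> assume "\<omega> \<in> space M"
    then have "\<bar>f \<omega>\<bar> \<le> c" by (rule assms(3))
    then show "norm (f \<omega> * g \<omega>) \<le> norm (c * g \<omega>)"
      by (simp add: abs_mult mult_right_mono)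
  qed
qed (use assms in auto)

lemma nn_integral_truncate_SUP:
  assumes [measurable]: "f \<in> borel_measurable M" "t \<in> borel_measurable M"
  shows "(\<integral>\<^sup>+\<omega>. ennreal (f \<omega>) \<partial>M) = (SUP c::nat. \<integral>\<^sup>+\<omega>. ennreal (if t \<omega> \<le> real c then f \<omega> else 0) \<partial>M)"
proof -
  have "(SUP c::nat. ennreal (if t \<omega> \<le> real c then f \<omega> else 0)) = ennreal (f \<omega>)" for \<omega>
  proof (rule antisym)
    show "(SUP c::nat. ennreal (if t \<omega> \<le> real c then f \<omega> else 0)) \<le> ennreal (f \<omega>)"
      by (rule SUP_least) (auto simp: ennreal_neg)
    show "ennreal (f \<omega>) \<le> (SUP c::nat. ennreal (if t \<omega> \<le> real c then f \<omega> else 0))"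
      using real_nat_ceiling_ge[of "t \<omega>"] by (intro SUP_upper2[of "nat \<lceil>t \<omega>\<rceil>"]) auto
  qed
  then have "(\<integral>\<^sup>+\<omega>. ennreal (f \<omega>) \<partial>M) = (\<integral>\<^sup>+\<omega>. (SUP c::nat. ennreal (if t \<omega> \<le> real c then f \<omega> else 0)) \<partial>M)"
    by simp
  also have "\<dots> = (SUP c::nat. \<integral>\<^sup>+\<omega>. ennreal (if t \<omega> \<le> real c then f \<omega> else 0) \<partial>M)"
    by (rule nn_integral_monotone_convergence_SUP) (auto simp: incseq_def le_fun_def)
  finally show ?thesis .
qed

section \<open>Independence\<close>

lemma (in prob_space) indep_rv_distr_pair:
  assumes [measurable]: "X \<in> measurable M N" "Y \<in> measurable M L" and indep: "indep_rv M X N Y L"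
  shows "distr M N X \<Otimes>\<^sub>M distr M L Y = distr M (N \<Otimes>\<^sub>M L) (\<lambda>\<omega>. (X \<omega>, Y \<omega>))"
proof -
  have prod: "emeasure M ({\<omega>\<in>space M. X \<omega> \<in> B} \<inter> {\<omega>\<in>space M. Y \<omega> \<in> C})
      = emeasure M {\<omega>\<in>space M. X \<omega> \<in> B} * emeasure M {\<omega>\<in>space M. Y \<omega> \<in> C}"
    if "B \<in> sets N" "C \<in> sets L" for B C
    using indep that by (simp add: indep_rv_def emeasure_eq_measure ennreal_mult)
  interpret DX: prob_space "distr M N X" by (rule prob_space_distr) measurable
  interpret DY: prob_space "distr M L Y" by (rule prob_space_distr) measurable
  interpret pair_prob_space "distr M N X" "distr M L Y" ..
  show ?thesis
  proof (rule pair_measure_eqI)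
    show "sigma_finite_measure (distr M N X)" "sigma_finite_measure (distr M L Y)" ..
    fix B C assume B: "B \<in> sets (distr M N X)" and C: "C \<in> sets (distr M L Y)"
    have "emeasure (distr M (N \<Otimes>\<^sub>M L) (\<lambda>\<omega>. (X \<omega>, Y \<omega>))) (B \<times> C)
        = emeasure M ({\<omega>\<in>space M. X \<omega> \<in> B} \<inter> {\<omega>\<in>space M. Y \<omega> \<in> C})"
      using B C by (subst emeasure_distr) (auto intro!: arg_cong[where f="emeasure M"])
    also have "\<dots> = emeasure M {\<omega>\<in>space M. X \<omega> \<in> B} * emeasure M {\<omega>\<in>space M. Y \<omega> \<in> C}"
      using B C by (simp add: prod)
    also have "\<dots> = emeasure (distr M N X) B * emeasure (distr M L Y) C"
      using B C by (simp add: emeasure_distr vimage_def Int_def conj_commute)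
    finally show "emeasure (distr M N X) B * emeasure (distr M L Y) C
      = emeasure (distr M (N \<Otimes>\<^sub>M L) (\<lambda>\<omega>. (X \<omega>, Y \<omega>))) (B \<times> C)" by simp
  qed simp
qed

lemma (in prob_space) nn_integral_indep_rv_mult:
  fixes \<alpha> :: "'b \<Rightarrow> ennreal" and \<beta> :: "'c \<Rightarrow> ennreal"
  assumes [measurable]: "X \<in> measurable M N" "Y \<in> measurable M L" and indep: "indep_rv M X N Y L"
    and [measurable]: "\<alpha> \<in> borel_measurable N" "\<beta> \<in> borel_measurable L"
  shows "(\<integral>\<^sup>+\<omega>. \<alpha> (X \<omega>) * \<beta> (Y \<omega>) \<partial>M) = (\<integral>\<^sup>+\<omega>. \<alpha> (X \<omega>) \<partial>M) * (\<integral>\<^sup>+\<omega>. \<beta> (Y \<omega>) \<partial>M)"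
proof -
  let ?DX = "distr M N X" and ?DY = "distr M L Y"
  interpret DX: prob_space ?DX by (rule prob_space_distr) measurable
  interpret DY: prob_space ?DY by (rule prob_space_distr) measurable
  interpret pair_sigma_finite ?DX ?DY ..
  have "(\<integral>\<^sup>+\<omega>. \<alpha> (X \<omega>) * \<beta> (Y \<omega>) \<partial>M)
      = (\<integral>\<^sup>+p. \<alpha> (fst p) * \<beta> (snd p) \<partial>distr M (N \<Otimes>\<^sub>M L) (\<lambda>\<omega>. (X \<omega>, Y \<omega>)))"
    by (subst nn_integral_distr) auto
  also have "\<dots> = (\<integral>\<^sup>+p. \<alpha> (fst p) * \<beta> (snd p) \<partial>(?DX \<Otimes>\<^sub>M ?DY))"
    by (simp add: indep_rv_distr_pair[OF assms(1-3)])
  also have "\<dots> = (\<integral>\<^sup>+\<xi>. \<alpha> \<xi> * (\<integral>\<^sup>+\<eta>. \<beta> \<eta> \<partial>?DY) \<partial>?DX)"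
    by (subst DY.nn_integral_fst[symmetric]) (auto simp: nn_integral_cmult)
  also have "\<dots> = (\<integral>\<^sup>+\<omega>. \<alpha> (X \<omega>) \<partial>M) * (\<integral>\<^sup>+\<omega>. \<beta> (Y \<omega>) \<partial>M)"
    by (simp add: nn_integral_multc nn_integral_distr)
  finally show ?thesis .
qed

lemma (in prob_space) real_cond_exp_indicator_indep_rv:
  assumes [measurable]: "X \<in> measurable M N" "Y \<in> measurable M L" and indep: "indep_rv M X N Y L"
    and B: "B \<in> sets N"
  shows "AE \<omega> in M. real_cond_exp M (vimage_algebra (space M) Y L) (\<lambda>\<omega>. indicator B (X \<omega>)) \<omega>
    = prob {\<omega>\<in>space M. X \<omega> \<in> B}"
proof -
  interpret F: sigma_finite_subalgebra M "vimage_algebra (space M) Y L"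
    by (rule sigma_finite_subalgebra_vimage_algebra) measurable
  show ?thesis
  proof (rule F.real_cond_exp_charact)
    fix E assume "E \<in> sets (vimage_algebra (space M) Y L)"
    then obtain C where C: "C \<in> sets L" "E = {\<omega>\<in>space M. Y \<omega> \<in> C}"
      using sets_vimage_algebra2[of Y "space M" L] measurable_space[of Y M L] by (auto simp: vimage_def Int_def)
    have "(\<integral>\<omega>\<in>E. indicator B (X \<omega>) \<partial>M) = (\<integral>\<omega>. indicator ({\<omega>\<in>space M. X \<omega> \<in> B} \<inter> E) \<omega> \<partial>M)"
      unfolding set_lebesgue_integral_def by (rule Bochner_Integration.integral_cong) (auto simp: C indicator_def)
    also have "\<dots> = prob ({\<omega>\<in>space M. X \<omega> \<in> B} \<inter> E)"
      using C by (auto intro!: arg_cong[where f=prob])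
    also have "\<dots> = prob {\<omega>\<in>space M. X \<omega> \<in> B} * prob E"
      using indep B C by (simp add: indep_rv_def)
    also have "\<dots> = (\<integral>\<omega>\<in>E. prob {\<omega>\<in>space M. X \<omega> \<in> B} \<partial>M)"
      using C by (subst set_integral_const) auto
    finally show "(\<integral>\<omega>\<in>E. indicator B (X \<omega>) \<partial>M) = (\<integral>\<omega>\<in>E. prob {\<omega>\<in>space M. X \<omega> \<in> B} \<partial>M)" .
  qed (use B in \<open>auto intro!: integrable_const_bound[where B=1]\<close>)
qed

lemma Int_stable_vimage:
  assumes "Int_stable E"
  shows "Int_stable {f -` C \<inter> \<Omega> | C. C \<in> E}"
proof (rule Int_stableI)
  fix a b assume "a \<in> {f -` C \<inter> \<Omega> | C. C \<in> E}" "b \<in> {f -` C \<inter> \<Omega> | C. C \<in> E}"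
  then obtain C D where "C \<in> E" "D \<in> E" "a = f -` C \<inter> \<Omega>" "b = f -` D \<inter> \<Omega>" by blast
  with assms show "a \<inter> b \<in> {f -` C \<inter> \<Omega> | C. C \<in> E}"
    by (intro CollectI exI[of _ "C \<inter> D"]) (auto dest: Int_stableD)
qed

lemma (in prob_space) prob_rectangle_of_cond_indep:
  assumes [measurable]: "X \<in> measurable M N" "Y \<in> measurable M L" "Z \<in> measurable M P"
    and indep: "indep_rv M X N Y L" and cind: "cond_indep M Z P X N (gen_sigma M Y L)"
    and [measurable]: "B \<in> sets N" "C \<in> sets L" "D \<in> sets P"
  shows "prob ({\<omega>\<in>space M. X \<omega> \<in> B} \<inter> {\<omega>\<in>space M. Y \<omega> \<in> C \<and> Z \<omega> \<in> D})
    = prob {\<omega>\<in>space M. X \<omega> \<in> B} * prob {\<omega>\<in>space M. Y \<omega> \<in> C \<and> Z \<omega> \<in> D}"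
proof -
  let ?F = "vimage_algebra (space M) Y L"
  interpret F: sigma_finite_subalgebra M ?F
    by (rule sigma_finite_subalgebra_vimage_algebra) measurable
  let ?p = "prob {\<omega>\<in>space M. X \<omega> \<in> B}"
  define iB where "iB \<omega> = (indicator B (X \<omega>) :: real)" for \<omega>
  define iC where "iC \<omega> = (indicator C (Y \<omega>) :: real)" for \<omega>
  define iD where "iD \<omega> = (indicator D (Z \<omega>) :: real)" for \<omega>
  have [measurable]: "iB \<in> borel_measurable M" "iC \<in> borel_measurable M" "iD \<in> borel_measurable M"
    unfolding iB_def iC_def iD_def by measurable
  have iC_F [measurable]: "iC \<in> borel_measurable ?F"
    unfolding iC_def using measurable_space[OF assms(2)] by (intro measurable_vimage_algebra_comp) auto
  have int: "integrable M (\<lambda>\<omega>. iC \<omega> * (iD \<omega> * iB \<omega>))" "integrable M (\<lambda>\<omega>. iC \<omega> * iD \<omega>)"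
    by (auto intro!: integrable_const_bound[where B=1] simp: iB_def iC_def iD_def indicator_def)
  have as_integral: "prob S = (\<integral>\<omega>. f \<omega> \<partial>M)"
    if "S \<in> sets M" "\<And>\<omega>. \<omega> \<in> space M \<Longrightarrow> f \<omega> = indicator S \<omega>" for S and f :: "'a \<Rightarrow> real"
    using that by (simp add: Bochner_Integration.integral_cong[OF refl that(2)] Int_absorb2 sets.sets_into_space)
  have "prob ({\<omega>\<in>space M. X \<omega> \<in> B} \<inter> {\<omega>\<in>space M. Y \<omega> \<in> C \<and> Z \<omega> \<in> D})
      = (\<integral>\<omega>. iC \<omega> * (iD \<omega> * iB \<omega>) \<partial>M)"
    by (rule as_integral) (auto simp: iB_def iC_def iD_def indicator_def)
  also have "\<dots> = (\<integral>\<omega>. iC \<omega> * real_cond_exp M ?F (\<lambda>\<omega>. iD \<omega> * iB \<omega>) \<omega> \<partial>M)"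
    by (rule F.real_cond_exp_intg(2)[symmetric]) (auto intro: int)
  also have "\<dots> = (\<integral>\<omega>. iC \<omega> * (real_cond_exp M ?F iD \<omega> * real_cond_exp M ?F iB \<omega>) \<partial>M)"
  proof (rule integral_cong_AE)
    show "AE \<omega> in M. iC \<omega> * real_cond_exp M ?F (\<lambda>\<omega>. iD \<omega> * iB \<omega>) \<omega>
        = iC \<omega> * (real_cond_exp M ?F iD \<omega> * real_cond_exp M ?F iB \<omega>)"
      using cind assms(6,8) unfolding cond_indep_def gen_sigma_def iB_def iD_def by fastforce
  qed measurable
  also have "\<dots> = (\<integral>\<omega>. ?p * (iC \<omega> * real_cond_exp M ?F iD \<omega>) \<partial>M)"
    using real_cond_exp_indicator_indep_rv[OF assms(1,2) indep, of B] unfolding iB_def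
    by (intro integral_cong_AE) auto
  also have "\<dots> = ?p * (\<integral>\<omega>. iC \<omega> * iD \<omega> \<partial>M)"
    using F.real_cond_exp_intg(2)[OF int(2)] by simp
  also have "(\<integral>\<omega>. iC \<omega> * iD \<omega> \<partial>M) = prob {\<omega>\<in>space M. Y \<omega> \<in> C \<and> Z \<omega> \<in> D}"
    by (rule as_integral[symmetric]) (auto simp: iC_def iD_def indicator_def)
  finally show ?thesis .
qed

lemma (in prob_space) indep_rv_pair_of_cond_indep:
  assumes [measurable]: "X \<in> measurable M N" "Y \<in> measurable M L" "Z \<in> measurable M P"
    and indep: "indep_rv M X N Y L" and cind: "cond_indep M Z P X N (gen_sigma M Y L)"
  shows "indep_rv M X N (\<lambda>\<omega>. (Y \<omega>, Z \<omega>)) (L \<Otimes>\<^sub>M P)"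
proof -
  define GX where "GX = {X -` B \<inter> space M | B. B \<in> sets N}"
  define R where "R = {C \<times> D | C D. C \<in> sets L \<and> D \<in> sets P}"
  define GYZ where "GYZ = {(\<lambda>\<omega>. (Y \<omega>, Z \<omega>)) -` E \<inter> space M | E. E \<in> R}"
  have "indep_set GX GYZ"
    unfolding indep_sets2_eq
  proof (intro conjI ballI)
    fix a b assume "a \<in> GX" "b \<in> GYZ"
    then obtain B C D where "B \<in> sets N" "a = {\<omega>\<in>space M. X \<omega> \<in> B}"
      and "C \<in> sets L" "D \<in> sets P" "b = {\<omega>\<in>space M. Y \<omega> \<in> C \<and> Z \<omega> \<in> D}"
      unfolding GX_def GYZ_def R_def by auto
    then show "prob (a \<inter> b) = prob a * prob b"
      using prob_rectangle_of_cond_indep[OF assms] by simp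
  qed (auto simp: GX_def GYZ_def R_def)
  moreover have "Int_stable GX"
    unfolding GX_def by (intro Int_stable_vimage Int_stableI sets.Int)
  moreover have "Int_stable GYZ"
    unfolding GYZ_def R_def by (intro Int_stable_vimage Int_stable_pair_measure_generator)
  ultimately have indep_sigma: "indep_set (sigma_sets (space M) GX) (sigma_sets (space M) GYZ)"
    by (rule indep_set_sigma_sets)
  have YZ: "(\<lambda>\<omega>. (Y \<omega>, Z \<omega>)) \<in> space M \<rightarrow> space L \<times> space P"
    using measurable_space[OF assms(2)] measurable_space[OF assms(3)] by auto
  have "sets (L \<Otimes>\<^sub>M P) = sigma_sets (space L \<times> space P) R"
    by (simp add: R_def sets_pair_measure)
  then have GYZ_sigma: "{(\<lambda>\<omega>. (Y \<omega>, Z \<omega>)) -` E \<inter> space M | E. E \<in> sets (L \<Otimes>\<^sub>M P)} = sigma_sets (space M) GYZ"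
    unfolding GYZ_def using sigma_sets_vimage_commute[OF YZ, of R] by simp
  show ?thesis
    unfolding indep_rv_def
  proof (intro ballI)
    fix B E assume "B \<in> sets N" "E \<in> sets (L \<Otimes>\<^sub>M P)"
    then have "{\<omega>\<in>space M. X \<omega> \<in> B} \<in> sigma_sets (space M) GX"
      and "{\<omega>\<in>space M. (Y \<omega>, Z \<omega>) \<in> E} \<in> sigma_sets (space M) GYZ"
      using GYZ_sigma by (auto simp: GX_def vimage_def Int_def conj_commute)
    with indep_sigma show "prob ({\<omega>\<in>space M. X \<omega> \<in> B} \<inter> {\<omega>\<in>space M. (Y \<omega>, Z \<omega>) \<in> E})
        = prob {\<omega>\<in>space M. X \<omega> \<in> B} * prob {\<omega>\<in>space M. (Y \<omega>, Z \<omega>) \<in> E}"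
      unfolding indep_sets2_eq by blast
  qed
qed

section \<open>Conditioning on an independent variable\<close>

lemma (in prob_space) nn_integral_rectangle_cond_exp_indep:
  assumes [measurable]: "X \<in> measurable M N" "W \<in> measurable M L" and indep: "indep_rv M X N W L"
    and [measurable]: "\<kappa> \<in> measurable L K" "\<zeta> \<in> borel_measurable L"
    and \<zeta>_nonneg: "\<And>w. 0 \<le> \<zeta> w" and \<zeta>_int: "integrable M (\<lambda>\<omega>. \<zeta> (W \<omega>))"
    and [measurable]: "B \<in> sets N" "C \<in> sets K"
  shows "(\<integral>\<^sup>+\<omega>. indicator B (X \<omega>) * indicator C (\<kappa> (W \<omega>)) * ennreal (\<zeta> (W \<omega>)) \<partial>M)
    = (\<integral>\<^sup>+\<omega>. indicator B (X \<omega>) * indicator C (\<kappa> (W \<omega>)) *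
        ennreal (real_cond_exp M (vimage_algebra (space M) (\<lambda>\<omega>. \<kappa> (W \<omega>)) K) (\<lambda>\<omega>. \<zeta> (W \<omega>)) \<omega>) \<partial>M)"
proof -
  let ?G = "vimage_algebra (space M) (\<lambda>\<omega>. \<kappa> (W \<omega>)) K"
  interpret G: sigma_finite_subalgebra M ?G
    by (rule sigma_finite_subalgebra_vimage_algebra) measurable
  have \<kappa>W: "(\<lambda>\<omega>. \<kappa> (W \<omega>)) \<in> space M \<rightarrow> space K"
    using measurable_space[of "\<lambda>\<omega>. \<kappa> (W \<omega>)" M K] by auto
  define Y where "Y = real_cond_exp M ?G (\<lambda>\<omega>. \<zeta> (W \<omega>))"
  have Y_G: "Y \<in> borel_measurable ?G" unfolding Y_def by measurable
  then obtain y where [measurable]: "y \<in> borel_measurable K" and y: "\<And>\<omega>. \<omega> \<in> space M \<Longrightarrow> Y \<omega> = y (\<kappa> (W \<omega>))"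
    using vimage_algebra_factorization_real[OF \<kappa>W] by blast
  have Y_nonneg: "AE \<omega> in M. 0 \<le> Y \<omega>"
    unfolding Y_def using \<zeta>_nonneg by (intro G.real_cond_exp_pos) auto
  have iC_G: "(\<lambda>\<omega>. indicator C (\<kappa> (W \<omega>)) :: real) \<in> borel_measurable ?G"
    by (rule measurable_vimage_algebra_comp[OF \<kappa>W]) measurable
  have int: "integrable M (\<lambda>\<omega>. indicator C (\<kappa> (W \<omega>)) * \<zeta> (W \<omega>))"
    by (rule Bochner_Integration.integrable_bound[OF \<zeta>_int]) (auto simp: indicator_def)
  have "(\<integral>\<^sup>+\<omega>. indicator C (\<kappa> (W \<omega>)) * ennreal (\<zeta> (W \<omega>)) \<partial>M)
      = ennreal (\<integral>\<omega>. indicator C (\<kappa> (W \<omega>)) * \<zeta> (W \<omega>) \<partial>M)"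
    using nn_integral_eq_integral[OF int] \<zeta>_nonneg by (simp add: indicator_mult_ennreal)
  also have "\<dots> = ennreal (\<integral>\<omega>. indicator C (\<kappa> (W \<omega>)) * Y \<omega> \<partial>M)"
    unfolding Y_def using G.real_cond_exp_intg(2)[OF int iC_G] by simp
  also have "\<dots> = (\<integral>\<^sup>+\<omega>. indicator C (\<kappa> (W \<omega>)) * ennreal (y (\<kappa> (W \<omega>))) \<partial>M)"
    using G.real_cond_exp_intg(1)[OF int iC_G] Y_nonneg unfolding Y_def[symmetric]
    by (subst nn_integral_eq_integral[symmetric])
       (auto intro!: nn_integral_cong simp: y indicator_mult_ennreal)
  finally have middle: "(\<integral>\<^sup>+\<omega>. indicator C (\<kappa> (W \<omega>)) * ennreal (\<zeta> (W \<omega>)) \<partial>M)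
      = (\<integral>\<^sup>+\<omega>. indicator C (\<kappa> (W \<omega>)) * ennreal (y (\<kappa> (W \<omega>))) \<partial>M)" .
  have "(\<integral>\<^sup>+\<omega>. indicator B (X \<omega>) * indicator C (\<kappa> (W \<omega>)) * ennreal (\<zeta> (W \<omega>)) \<partial>M)
      = (\<integral>\<^sup>+\<omega>. indicator B (X \<omega>) \<partial>M) * (\<integral>\<^sup>+\<omega>. indicator C (\<kappa> (W \<omega>)) * ennreal (\<zeta> (W \<omega>)) \<partial>M)"
    using nn_integral_indep_rv_mult[OF assms(1-3), of "indicator B" "\<lambda>w. indicator C (\<kappa> w) * ennreal (\<zeta> w)"]
    by (simp add: mult.assoc)
  also have "\<dots> = (\<integral>\<^sup>+\<omega>. indicator B (X \<omega>) * indicator C (\<kappa> (W \<omega>)) * ennreal (y (\<kappa> (W \<omega>))) \<partial>M)"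
    using nn_integral_indep_rv_mult[OF assms(1-3), of "indicator B" "\<lambda>w. indicator C (\<kappa> w) * ennreal (y (\<kappa> w))"]
    by (simp add: middle mult.assoc)
  also have "\<dots> = (\<integral>\<^sup>+\<omega>. indicator B (X \<omega>) * indicator C (\<kappa> (W \<omega>)) * ennreal (Y \<omega>) \<partial>M)"
    by (rule nn_integral_cong) (simp add: y)
  finally show ?thesis unfolding Y_def .
qed

text \<open>Both sides are finite measures in \<open>D\<close> that agree on the rectangles \<open>B \<times> C\<close>.\<close>
lemma (in prob_space) nn_integral_indicator_cond_exp_indep:
  assumes [measurable]: "X \<in> measurable M N" "W \<in> measurable M L" and indep: "indep_rv M X N W L"
    and [measurable]: "\<kappa> \<in> measurable L K" "\<zeta> \<in> borel_measurable L"
    and \<zeta>_nonneg: "\<And>w. 0 \<le> \<zeta> w" and \<zeta>_int: "integrable M (\<lambda>\<omega>. \<zeta> (W \<omega>))"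
    and D: "D \<in> sets (N \<Otimes>\<^sub>M K)"
  shows "(\<integral>\<^sup>+\<omega>. indicator D (X \<omega>, \<kappa> (W \<omega>)) * ennreal (\<zeta> (W \<omega>)) \<partial>M)
    = (\<integral>\<^sup>+\<omega>. indicator D (X \<omega>, \<kappa> (W \<omega>)) *
        ennreal (real_cond_exp M (vimage_algebra (space M) (\<lambda>\<omega>. \<kappa> (W \<omega>)) K) (\<lambda>\<omega>. \<zeta> (W \<omega>)) \<omega>) \<partial>M)"
proof -
  let ?V = "\<lambda>\<omega>. (X \<omega>, \<kappa> (W \<omega>))"
  define Y where "Y = real_cond_exp M (vimage_algebra (space M) (\<lambda>\<omega>. \<kappa> (W \<omega>)) K) (\<lambda>\<omega>. \<zeta> (W \<omega>))"
  define \<nu> where "\<nu> f = distr (density M (\<lambda>\<omega>. ennreal (f \<omega>))) (N \<Otimes>\<^sub>M K) ?V" for f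
  have \<nu>_emeasure: "emeasure (\<nu> f) E = (\<integral>\<^sup>+\<omega>. indicator E (?V \<omega>) * ennreal (f \<omega>) \<partial>M)"
    if [measurable]: "f \<in> borel_measurable M" "E \<in> sets (N \<Otimes>\<^sub>M K)" for f E
    unfolding \<nu>_def using that
    by (simp add: emeasure_distr emeasure_density) (auto intro!: nn_integral_cong simp: indicator_def)
  have "\<nu> (\<lambda>\<omega>. \<zeta> (W \<omega>)) = \<nu> Y"
  proof (rule measure_eqI_generator_eq[OF Int_stable_pair_measure_generator pair_measure_closed])
    fix R assume "R \<in> {B \<times> C |B C. B \<in> sets N \<and> C \<in> sets K}"
    then obtain B C where [measurable]: "B \<in> sets N" "C \<in> sets K" and R: "R = B \<times> C" by blast
    show "emeasure (\<nu> (\<lambda>\<omega>. \<zeta> (W \<omega>))) R = emeasure (\<nu> Y) R"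
      using nn_integral_rectangle_cond_exp_indep[OF assms(1-7), of B C]
      by (simp add: R \<nu>_emeasure Y_def indicator_times mult_ac)
  next
    show "range (\<lambda>_. space N \<times> space K) \<subseteq> {B \<times> C |B C. B \<in> sets N \<and> C \<in> sets K}" by blast
    show "(\<Union>i::nat. space N \<times> space K) = space N \<times> space K" by simp
    have "emeasure (\<nu> (\<lambda>\<omega>. \<zeta> (W \<omega>))) (space N \<times> space K) = (\<integral>\<^sup>+\<omega>. ennreal (\<zeta> (W \<omega>)) \<partial>M)"
      using measurable_space[of ?V M "N \<Otimes>\<^sub>M K"]
      by (subst \<nu>_emeasure) (auto intro!: nn_integral_cong simp: space_pair_measure)
    also have "\<dots> = ennreal (\<integral>\<omega>. \<zeta> (W \<omega>) \<partial>M)"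
      using nn_integral_eq_integral[OF \<zeta>_int] \<zeta>_nonneg by simp
    finally show "emeasure (\<nu> (\<lambda>\<omega>. \<zeta> (W \<omega>))) (space N \<times> space K) \<noteq> \<infinity>" by simp
  qed (simp_all add: \<nu>_def sets_pair_measure)
  then show ?thesis
    using \<nu>_emeasure[OF _ D, of "\<lambda>\<omega>. \<zeta> (W \<omega>)"] \<nu>_emeasure[OF _ D, of Y] by (simp add: Y_def)
qed

lemma (in prob_space) real_cond_exp_indep_enlarge_nonneg:
  assumes [measurable]: "X \<in> measurable M N" "W \<in> measurable M L" and indep: "indep_rv M X N W L"
    and [measurable]: "\<kappa> \<in> measurable L K" "\<zeta> \<in> borel_measurable L"
    and \<zeta>_nonneg: "\<And>w. 0 \<le> \<zeta> w" and \<zeta>_int: "integrable M (\<lambda>\<omega>. \<zeta> (W \<omega>))"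
  shows "AE \<omega> in M. real_cond_exp M (vimage_algebra (space M) (\<lambda>\<omega>. (X \<omega>, \<kappa> (W \<omega>))) (N \<Otimes>\<^sub>M K)) (\<lambda>\<omega>. \<zeta> (W \<omega>)) \<omega>
    = real_cond_exp M (vimage_algebra (space M) (\<lambda>\<omega>. \<kappa> (W \<omega>)) K) (\<lambda>\<omega>. \<zeta> (W \<omega>)) \<omega>"
proof -
  let ?V = "\<lambda>\<omega>. (X \<omega>, \<kappa> (W \<omega>))"
  let ?G = "vimage_algebra (space M) (\<lambda>\<omega>. \<kappa> (W \<omega>)) K" and ?H = "vimage_algebra (space M) ?V (N \<Otimes>\<^sub>M K)"
  interpret G: sigma_finite_subalgebra M ?G
    by (rule sigma_finite_subalgebra_vimage_algebra) measurable
  interpret H: sigma_finite_subalgebra M ?H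
    by (rule sigma_finite_subalgebra_vimage_algebra) measurable
  have V: "?V \<in> space M \<rightarrow> space (N \<Otimes>\<^sub>M K)"
    using measurable_space[of ?V M "N \<Otimes>\<^sub>M K"] by auto
  have "subalgebra ?H (vimage_algebra (space M) (\<lambda>\<omega>. snd (?V \<omega>)) K)"
    by (rule subalgebra_vimage_algebra_comp[OF V]) simp
  then have GH: "subalgebra ?H ?G" by simp
  define Y where "Y = real_cond_exp M ?G (\<lambda>\<omega>. \<zeta> (W \<omega>))"
  have Y_H: "Y \<in> borel_measurable ?H"
    unfolding Y_def by (rule measurable_from_subalg[OF GH]) measurable
  have Y_nonneg: "AE \<omega> in M. 0 \<le> Y \<omega>"
    unfolding Y_def using \<zeta>_nonneg by (intro G.real_cond_exp_pos) auto
  have Y_int: "integrable M Y" unfolding Y_def by (rule G.real_cond_exp_int(1)[OF \<zeta>_int])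
  have set_integral: "ennreal (\<integral>\<omega>\<in>?V -` D \<inter> space M. f \<omega> \<partial>M)
      = (\<integral>\<^sup>+\<omega>. indicator D (?V \<omega>) * ennreal (f \<omega>) \<partial>M)"
    if [measurable]: "f \<in> borel_measurable M" "D \<in> sets (N \<Otimes>\<^sub>M K)"
      and "integrable M f" "AE \<omega> in M. 0 \<le> f \<omega>" for f D
  proof -
    have "ennreal (\<integral>\<omega>\<in>?V -` D \<inter> space M. f \<omega> \<partial>M)
        = (\<integral>\<^sup>+\<omega>. ennreal (f \<omega> * indicator (?V -` D \<inter> space M) \<omega>) \<partial>M)"
      unfolding set_lebesgue_integral_def using that(3,4)
      by (subst nn_integral_eq_integral) (auto simp: mult.commute intro!: integrable_real_mult_indicator)
    also have "\<dots> = (\<integral>\<^sup>+\<omega>. indicator D (?V \<omega>) * ennreal (f \<omega>) \<partial>M)"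
      by (auto intro!: nn_integral_cong simp: indicator_def)
    finally show ?thesis .
  qed
  have "(\<integral>\<omega>\<in>E. \<zeta> (W \<omega>) \<partial>M) = (\<integral>\<omega>\<in>E. Y \<omega> \<partial>M)" if E: "E \<in> sets ?H" for E
  proof -
    obtain D where D: "D \<in> sets (N \<Otimes>\<^sub>M K)" "E = ?V -` D \<inter> space M"
      using E sets_vimage_algebra2[OF V] by auto
    have "ennreal (\<integral>\<omega>\<in>E. \<zeta> (W \<omega>) \<partial>M) = ennreal (\<integral>\<omega>\<in>E. Y \<omega> \<partial>M)"
      using \<zeta>_int Y_int Y_nonneg \<zeta>_nonneg nn_integral_indicator_cond_exp_indep[OF assms D(1)]
      by (simp add: D set_integral Y_def)
    moreover have "0 \<le> (\<integral>\<omega>\<in>E. \<zeta> (W \<omega>) \<partial>M)" "0 \<le> (\<integral>\<omega>\<in>E. Y \<omega> \<partial>M)"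
      using Y_nonneg \<zeta>_nonneg unfolding set_lebesgue_integral_def
      by (auto intro!: integral_nonneg_AE simp: indicator_def)
    ultimately show ?thesis by simp
  qed
  then show ?thesis
    unfolding Y_def by (intro H.real_cond_exp_charact) (use \<zeta>_int Y_int Y_H Y_def in auto)
qed

lemma (in prob_space) real_cond_exp_indep_enlarge:
  assumes [measurable]: "X \<in> measurable M N" "W \<in> measurable M L" and indep: "indep_rv M X N W L"
    and [measurable]: "\<kappa> \<in> measurable L K" "\<zeta> \<in> borel_measurable L"
    and \<zeta>_int: "integrable M (\<lambda>\<omega>. \<zeta> (W \<omega>))"
  shows "AE \<omega> in M. real_cond_exp M (vimage_algebra (space M) (\<lambda>\<omega>. (X \<omega>, \<kappa> (W \<omega>))) (N \<Otimes>\<^sub>M K)) (\<lambda>\<omega>. \<zeta> (W \<omega>)) \<omega>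
    = real_cond_exp M (vimage_algebra (space M) (\<lambda>\<omega>. \<kappa> (W \<omega>)) K) (\<lambda>\<omega>. \<zeta> (W \<omega>)) \<omega>"
proof -
  let ?G = "vimage_algebra (space M) (\<lambda>\<omega>. \<kappa> (W \<omega>)) K"
    and ?H = "vimage_algebra (space M) (\<lambda>\<omega>. (X \<omega>, \<kappa> (W \<omega>))) (N \<Otimes>\<^sub>M K)"
  interpret G: sigma_finite_subalgebra M ?G
    by (rule sigma_finite_subalgebra_vimage_algebra) measurable
  interpret H: sigma_finite_subalgebra M ?H
    by (rule sigma_finite_subalgebra_vimage_algebra) measurable
  define \<zeta>p where "\<zeta>p w = max (\<zeta> w) 0" for w
  define \<zeta>n where "\<zeta>n w = max (- \<zeta> w) 0" for w
  have [measurable]: "\<zeta>p \<in> borel_measurable L" "\<zeta>n \<in> borel_measurable L"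
    unfolding \<zeta>p_def \<zeta>n_def by measurable
  have int: "integrable M (\<lambda>\<omega>. \<zeta>p (W \<omega>))" "integrable M (\<lambda>\<omega>. \<zeta>n (W \<omega>))"
    unfolding \<zeta>p_def \<zeta>n_def using \<zeta>_int by (auto intro!: integrable_max)
  have split: "(\<lambda>\<omega>. \<zeta> (W \<omega>)) = (\<lambda>\<omega>. \<zeta>p (W \<omega>) - \<zeta>n (W \<omega>))"
    by (auto simp: \<zeta>p_def \<zeta>n_def fun_eq_iff)
  have "AE \<omega> in M. real_cond_exp M ?H (\<lambda>\<omega>. \<zeta>p (W \<omega>)) \<omega> = real_cond_exp M ?G (\<lambda>\<omega>. \<zeta>p (W \<omega>)) \<omega>"
    "AE \<omega> in M. real_cond_exp M ?H (\<lambda>\<omega>. \<zeta>n (W \<omega>)) \<omega> = real_cond_exp M ?G (\<lambda>\<omega>. \<zeta>n (W \<omega>)) \<omega>"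
    by (rule real_cond_exp_indep_enlarge_nonneg[OF assms(1-4)]; use int in \<open>auto simp: \<zeta>p_def \<zeta>n_def\<close>)+
  moreover note H.real_cond_exp_diff[OF int] G.real_cond_exp_diff[OF int]
  ultimately show ?thesis
    unfolding split by eventually_elim simp
qed

lemma borel_measurable_vcond_exp [measurable]: "vcond_exp M F X \<in> borel_measurable F"
  unfolding vcond_exp_def by measurable

lemma (in sigma_finite_subalgebra) integral_inner_vcond_exp:
  fixes X g :: "'a \<Rightarrow> real^'n"
  assumes X: "\<And>i. integrable M (\<lambda>\<omega>. X \<omega> $ i)"
    and g: "g \<in> borel_measurable F" and bound: "\<And>\<omega>. \<omega> \<in> space M \<Longrightarrow> norm (g \<omega>) \<le> c"
  shows "integrable M (\<lambda>\<omega>. g \<omega> \<bullet> X \<omega>)" and "integrable M (\<lambda>\<omega>. g \<omega> \<bullet> vcond_exp M F X \<omega>)"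
    and "(\<integral>\<omega>. g \<omega> \<bullet> vcond_exp M F X \<omega> \<partial>M) = (\<integral>\<omega>. g \<omega> \<bullet> X \<omega> \<partial>M)"
proof -
  have [measurable]: "(\<lambda>\<omega>. g \<omega> $ i) \<in> borel_measurable F" for i using g by measurable
  have int: "integrable M (\<lambda>\<omega>. g \<omega> $ i * X \<omega> $ i)" for i
    using bound component_le_norm_cart[of "g _" i]
    by (intro integrable_bounded_mult[OF X] measurable_from_subalg[OF subalg]) (auto intro: order_trans)
  have X_meas [measurable]: "(\<lambda>\<omega>. X \<omega> $ i) \<in> borel_measurable M" for i using X by auto
  have ce: "integrable M (\<lambda>\<omega>. g \<omega> $ i * real_cond_exp M F (\<lambda>\<omega>. X \<omega> $ i) \<omega>)"
    "(\<integral>\<omega>. g \<omega> $ i * real_cond_exp M F (\<lambda>\<omega>. X \<omega> $ i) \<omega> \<partial>M) = (\<integral>\<omega>. g \<omega> $ i * X \<omega> $ i \<partial>M)" for i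
    by (rule real_cond_exp_intg[OF int]; measurable)+
  show "integrable M (\<lambda>\<omega>. g \<omega> \<bullet> X \<omega>)"
    using int by (simp add: inner_vec_def)
  show "integrable M (\<lambda>\<omega>. g \<omega> \<bullet> vcond_exp M F X \<omega>)"
    using ce(1) by (simp add: inner_vec_def vcond_exp_def)
  show "(\<integral>\<omega>. g \<omega> \<bullet> vcond_exp M F X \<omega> \<partial>M) = (\<integral>\<omega>. g \<omega> \<bullet> X \<omega> \<partial>M)"
    using ce by (simp add: inner_vec_def vcond_exp_def Bochner_Integration.integral_sum int)
qed

lemma (in sigma_finite_subalgebra) integrable_norm_vcond_exp_square:
  fixes X :: "'a \<Rightarrow> real^'n"
  assumes X: "\<And>i. integrable M (\<lambda>\<omega>. X \<omega> $ i)" and X2: "integrable M (\<lambda>\<omega>. (norm (X \<omega>))\<^sup>2)"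
  shows "integrable M (\<lambda>\<omega>. (norm (vcond_exp M F X \<omega>))\<^sup>2)"
proof -
  have "integrable M (\<lambda>\<omega>. (X \<omega> $ i)\<^sup>2)" for i
    using X2 component_le_norm_cart[of "X _" i] X[of i]
    by (intro Bochner_Integration.integrable_bound[OF X2]) (auto simp: abs_le_square_iff[symmetric])
  then have "integrable M (\<lambda>\<omega>. (vcond_exp M F X \<omega> $ i)\<^sup>2)" for i
    unfolding vcond_exp_def using X
    by (auto intro!: integrable_convex_cond_exp[where I=UNIV] simp: convex_power2)
  then show ?thesis
    unfolding power2_norm_eq_inner inner_vec_def by (simp add: power2_eq_square[symmetric])
qed

section \<open>The measurement-splitting model\<close>

locale msplit_model =
  fixes M :: "'w measure" and x :: "'w \<Rightarrow> real^'n" and A :: "'w \<Rightarrow> real^'n^'m"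
    and S :: "'w \<Rightarrow> 'm set"
  assumes prob: "prob_space M"
    and x_meas [measurable]: "x \<in> borel_measurable M" and A_meas [measurable]: "A \<in> borel_measurable M"
    and S_meas [measurable]: "S \<in> measurable M (count_space UNIV)"
    and x_square_int: "integrable M (\<lambda>\<omega>. (norm (x \<omega>))\<^sup>2)"
    and AtA_int: "integrable M (\<lambda>\<omega>. norm (transpose (A \<omega>) ** A \<omega>))"
    and indep_x_A: "indep_rv M x borel A borel"
    and cond_indep_S_x: "cond_indep M S (count_space UNIV) x borel (gen_sigma M A borel)"
begin

sublocale prob_space M by (rule prob)

abbreviation "A1 \<equiv> \<lambda>\<omega>. (S \<omega>, row_select (S \<omega>) (A \<omega>))"

abbreviation "A1_space \<equiv> (count_space UNIV :: 'm set measure) \<Otimes>\<^sub>M (borel :: (real^'n^'m) measure)"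

abbreviation "F_xA1 \<equiv> vimage_algebra (space M) (\<lambda>\<omega>. (x \<omega>, A1 \<omega>)) (borel \<Otimes>\<^sub>M A1_space)"

abbreviation "AtA \<equiv> \<lambda>\<omega>. transpose (A \<omega>) ** A \<omega>"

abbreviation "Q \<equiv> Qmat M A S"

abbreviation "x_hat \<equiv> vcond_exp M (F_obs M x A S) x"

lemma indep_x_AS: "indep_rv M x borel (\<lambda>\<omega>. (A \<omega>, S \<omega>)) (borel \<Otimes>\<^sub>M count_space UNIV)"
  by (rule indep_rv_pair_of_cond_indep[OF x_meas A_meas S_meas indep_x_A cond_indep_S_x])

lemma obs_eq: "obs x A S \<omega> = (S \<omega>, row_select (S \<omega>) (A \<omega>) *v x \<omega>, row_select (S \<omega>) (A \<omega>))"
  by (simp add: obs_def row_select_matrix_vector_mult)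

lemma obs_meas [measurable]: "obs x A S \<in> measurable M obs_space"
  unfolding obs_eq[abs_def] obs_space_def by (simp add: borel_prod[symmetric])

lemma obs_comp_meas_F_obs:
  "f \<in> borel_measurable obs_space \<Longrightarrow> (\<lambda>\<omega>. f (obs x A S \<omega>)) \<in> borel_measurable (F_obs M x A S)"
  unfolding F_obs_def gen_sigma_def using measurable_space[OF obs_meas]
  by (intro measurable_vimage_algebra_comp) auto

lemma F_A1_eq: "F_A1 M A S = vimage_algebra (space M) A1 A1_space"
  by (simp add: F_A1_def gen_sigma_def)

lemma sigma_finite_F_A1: "sigma_finite_subalgebra M (F_A1 M A S)"
  unfolding F_A1_eq by (rule sigma_finite_subalgebra_vimage_algebra) measurable

lemma sigma_finite_F_obs: "sigma_finite_subalgebra M (F_obs M x A S)"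
  unfolding F_obs_def gen_sigma_def by (rule sigma_finite_subalgebra_vimage_algebra) measurable

lemma sigma_finite_F_xA1: "sigma_finite_subalgebra M F_xA1"
  by (rule sigma_finite_subalgebra_vimage_algebra) measurable

lemma subalgebra_F_obs_F_A1: "subalgebra (F_obs M x A S) (F_A1 M A S)"
proof -
  have "subalgebra (F_obs M x A S) (vimage_algebra (space M) (\<lambda>\<omega>. (\<lambda>(s, y, a). (s, a)) (obs x A S \<omega>)) A1_space)"
    unfolding F_obs_def gen_sigma_def
  proof (rule subalgebra_vimage_algebra_comp)
    show "obs x A S \<in> space M \<rightarrow> space obs_space" using measurable_space[OF obs_meas] by auto
    show "(\<lambda>(s, y, a). (s, a)) \<in> measurable obs_space A1_space"
      unfolding obs_space_def by (simp add: borel_prod[symmetric])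
  qed
  then show ?thesis by (simp add: F_A1_eq obs_def)
qed

lemma subalgebra_F_xA1_F_obs: "subalgebra F_xA1 (F_obs M x A S)"
proof -
  have "subalgebra F_xA1 (vimage_algebra (space M)
      (\<lambda>\<omega>. (\<lambda>(\<xi>, s, a). (s, a *v \<xi>, a)) (x \<omega>, A1 \<omega>)) obs_space)"
    by (rule subalgebra_vimage_algebra_comp)
       (auto simp: obs_space_def borel_prod[symmetric] measurable_space space_pair_measure)
  then show ?thesis by (simp add: F_obs_def gen_sigma_def obs_eq[abs_def])
qed

lemma measurable_F_obs_F_xA1: "f \<in> measurable (F_obs M x A S) N \<Longrightarrow> f \<in> measurable F_xA1 N"
  by (rule measurable_from_subalg[OF subalgebra_F_xA1_F_obs])

lemma measurable_F_A1_F_obs: "f \<in> measurable (F_A1 M A S) N \<Longrightarrow> f \<in> measurable (F_obs M x A S) N"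
  by (rule measurable_from_subalg[OF subalgebra_F_obs_F_A1])

lemma x_meas_F_xA1: "x \<in> borel_measurable F_xA1"
  using measurable_vimage_algebra_comp[of "\<lambda>\<omega>. (x \<omega>, A1 \<omega>)" "space M" "borel \<Otimes>\<^sub>M A1_space" fst borel]
  by (simp add: measurable_space space_pair_measure)

lemma Q_entry: "Q \<omega> $ i $ j = real_cond_exp M (F_A1 M A S) (\<lambda>\<omega>. AtA \<omega> $ i $ j) \<omega>"
  by (simp add: Qmat_def mcond_exp_def)

lemma Q_symmetric: "transpose (Q \<omega>) = Q \<omega>"
  by (simp add: vec_eq_iff transpose_def Q_entry matrix_matrix_mult_def mult.commute)

lemma Q_meas_F_A1: "Q \<in> borel_measurable (F_A1 M A S)"
  unfolding Qmat_def mcond_exp_def by measurable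

lemma Q_meas_F_obs: "Q \<in> borel_measurable (F_obs M x A S)"
  by (rule measurable_F_A1_F_obs[OF Q_meas_F_A1])

lemma Q_meas [measurable]: "Q \<in> borel_measurable M"
  by (rule measurable_from_subalg[OF sigma_finite_subalgebra.subalg[OF sigma_finite_F_A1] Q_meas_F_A1])

lemma x_hat_meas_F_obs: "x_hat \<in> borel_measurable (F_obs M x A S)"
  by measurable

lemma x_hat_meas [measurable]: "x_hat \<in> borel_measurable M"
  by (rule measurable_from_subalg[OF sigma_finite_subalgebra.subalg[OF sigma_finite_F_obs] x_hat_meas_F_obs])

lemma integrable_AtA_entry: "integrable M (\<lambda>\<omega>. AtA \<omega> $ i $ j)"
proof (rule Bochner_Integration.integrable_bound[OF AtA_int])
  show "AE \<omega> in M. norm (AtA \<omega> $ i $ j) \<le> norm (norm (AtA \<omega>))"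
    using Finite_Cartesian_Product.norm_nth_le[of "AtA _ $ i" j] Finite_Cartesian_Product.norm_nth_le[of "AtA _" i]
    by (auto intro: order_trans)
qed measurable

lemma integrable_x_component: "integrable M (\<lambda>\<omega>. x \<omega> $ i)"
proof (rule square_integrable_imp_integrable)
  show "integrable M (\<lambda>\<omega>. (x \<omega> $ i)\<^sup>2)"
    using component_le_norm_cart[of "x _" i]
    by (intro Bochner_Integration.integrable_bound[OF x_square_int]) (auto simp: abs_le_square_iff[symmetric])
qed measurable

lemma cond_exp_F_xA1_AtA:
  "AE \<omega> in M. real_cond_exp M F_xA1 (\<lambda>\<omega>. AtA \<omega> $ i $ j) \<omega> = Q \<omega> $ i $ j"
  using real_cond_exp_indep_enlarge[OF x_meas _ indep_x_AS, where \<kappa>="\<lambda>p. (snd p, row_select (snd p) (fst p))"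
      and K=A1_space and \<zeta>="\<lambda>p. (transpose (fst p) ** fst p) $ i $ j"] integrable_AtA_entry[of i j]
  by (simp add: F_A1_eq Q_entry)

lemma Q_form_const_cond_exp:
  "AE \<omega> in M. v \<bullet> (Q \<omega> *v v) = real_cond_exp M (F_A1 M A S) (\<lambda>\<omega>. (norm (A \<omega> *v v))\<^sup>2) \<omega>"
proof -
  interpret G: sigma_finite_subalgebra M "F_A1 M A S" by (rule sigma_finite_F_A1)
  define Z where "Z p \<omega> = v $ fst p * v $ snd p * AtA \<omega> $ fst p $ snd p" for p :: "'n \<times> 'n" and \<omega>
  have Z_int: "integrable M (Z p)" for p
    unfolding Z_def using integrable_AtA_entry by simp
  have sum_eq: "u \<bullet> (X *v u) = (\<Sum>p\<in>UNIV. u $ fst p * u $ snd p * X $ fst p $ snd p)" for u and X :: "real^'n^'n"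
    by (simp add: quadratic_form_expand sum.cartesian_product case_prod_unfold)
  have norm_eq: "(\<lambda>\<omega>. (norm (A \<omega> *v v))\<^sup>2) = (\<lambda>\<omega>. \<Sum>p\<in>UNIV. Z p \<omega>)"
    by (simp add: fun_eq_iff Z_def sum_eq power2_norm_eq_inner inner_matrix_vector_mult_same)
  have "AE \<omega> in M. \<forall>p\<in>UNIV. real_cond_exp M (F_A1 M A S) (Z p) \<omega> = v $ fst p * v $ snd p * Q \<omega> $ fst p $ snd p"
    unfolding Z_def Q_entry using integrable_AtA_entry
    by (intro AE_finite_allI) (auto intro: G.real_cond_exp_cmult[where c="v $ fst _ * v $ snd _"])
  moreover have "AE \<omega> in M. real_cond_exp M (F_A1 M A S) (\<lambda>\<omega>. \<Sum>p\<in>UNIV. Z p \<omega>) \<omega>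
      = (\<Sum>p\<in>UNIV. real_cond_exp M (F_A1 M A S) (Z p) \<omega>)"
    by (rule G.real_cond_exp_sum[OF Z_int])
  ultimately show ?thesis
  proof eventually_elim
    case (elim \<omega>)
    have "(\<Sum>p\<in>UNIV. real_cond_exp M (F_A1 M A S) (Z p) \<omega>) = (\<Sum>p\<in>UNIV. v $ fst p * v $ snd p * Q \<omega> $ fst p $ snd p)"
      using elim(1) by (intro sum.cong refl) blast
    with elim(2) show ?case by (simp add: norm_eq sum_eq)
  qed
qed

lemma Q_form_const_nonneg: "AE \<omega> in M. 0 \<le> v \<bullet> (Q \<omega> *v v)"
proof -
  interpret G: sigma_finite_subalgebra M "F_A1 M A S" by (rule sigma_finite_F_A1)
  have "AE \<omega> in M. 0 \<le> real_cond_exp M (F_A1 M A S) (\<lambda>\<omega>. (norm (A \<omega> *v v))\<^sup>2) \<omega>"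
    by (rule G.real_cond_exp_pos) auto
  with Q_form_const_cond_exp[of v] show ?thesis by eventually_elim simp
qed

text \<open>A closed condition that holds a.e. on a countable dense set of vectors holds a.e. for all of them.\<close>
lemma Q_psd: "AE \<omega> in M. \<forall>v. 0 \<le> v \<bullet> (Q \<omega> *v v)"
proof -
  obtain D :: "(real^'n) set" where D: "countable D" "\<And>U. open U \<Longrightarrow> U \<noteq> {} \<Longrightarrow> \<exists>d\<in>D. d \<in> U"
    by (rule countable_dense_setE) blast
  have "AE \<omega> in M. \<forall>v\<in>D. 0 \<le> v \<bullet> (Q \<omega> *v v)"
    using D(1) Q_form_const_nonneg by (subst AE_ball_countable) auto
  then show ?thesis
  proof eventually_elim
    case (elim \<omega>)
    show ?case
    proof (rule ccontr)
      assume "\<not> (\<forall>v. 0 \<le> v \<bullet> (Q \<omega> *v v))"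
      moreover have "open {v. v \<bullet> (Q \<omega> *v v) < 0}"
        by (intro open_Collect_less continuous_intros)
      ultimately obtain d where "d \<in> D" "d \<bullet> (Q \<omega> *v d) < 0"
        using D(2)[of "{v. v \<bullet> (Q \<omega> *v v) < 0}"] by (auto simp: not_le)
      then show False using elim by fastforce
    qed
  qed
qed

lemma Q_form_nonneg: "AE \<omega> in M. 0 \<le> v \<omega> \<bullet> (Q \<omega> *v v \<omega>)"
  using Q_psd by eventually_elim auto

lemma integral_norm_A_square_bounded:
  assumes \<phi>: "\<phi> \<in> borel_measurable F_xA1" and bound: "\<And>\<omega>. \<omega> \<in> space M \<Longrightarrow> norm (\<phi> \<omega>) \<le> c"
  shows "integrable M (\<lambda>\<omega>. (norm (A \<omega> *v \<phi> \<omega>))\<^sup>2)"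
    and "integrable M (\<lambda>\<omega>. \<phi> \<omega> \<bullet> (Q \<omega> *v \<phi> \<omega>))"
    and "(\<integral>\<omega>. (norm (A \<omega> *v \<phi> \<omega>))\<^sup>2 \<partial>M) = (\<integral>\<omega>. \<phi> \<omega> \<bullet> (Q \<omega> *v \<phi> \<omega>) \<partial>M)"
proof -
  interpret H: sigma_finite_subalgebra M F_xA1 by (rule sigma_finite_F_xA1)
  define g where "g i j \<omega> = \<phi> \<omega> $ i * \<phi> \<omega> $ j" for i j \<omega>
  have g_H [measurable]: "g i j \<in> borel_measurable F_xA1" for i j
    unfolding g_def using \<phi> by measurable
  have g_M [measurable]: "g i j \<in> borel_measurable M" for i j
    by (rule measurable_from_subalg[OF H.subalg g_H])
  have g_bound: "\<bar>g i j \<omega>\<bar> \<le> c * c" if "\<omega> \<in> space M" for i j \<omega>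
  proof -
    have "0 \<le> c" using bound[OF that] norm_ge_zero[of "\<phi> \<omega>"] by linarith
    moreover have "\<bar>\<phi> \<omega> $ k\<bar> \<le> c" for k
      using bound[OF that] component_le_norm_cart[of "\<phi> \<omega>" k] by linarith
    ultimately show ?thesis unfolding g_def abs_mult by (intro mult_mono) auto
  qed
  have int_AtA: "integrable M (\<lambda>\<omega>. g i j \<omega> * AtA \<omega> $ i $ j)" for i j
    by (rule integrable_bounded_mult[OF integrable_AtA_entry g_M g_bound])
  have ce: "integrable M (\<lambda>\<omega>. g i j \<omega> * real_cond_exp M F_xA1 (\<lambda>\<omega>. AtA \<omega> $ i $ j) \<omega>)"
    "(\<integral>\<omega>. g i j \<omega> * real_cond_exp M F_xA1 (\<lambda>\<omega>. AtA \<omega> $ i $ j) \<omega> \<partial>M) = (\<integral>\<omega>. g i j \<omega> * AtA \<omega> $ i $ j \<partial>M)"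
    for i j by (rule H.real_cond_exp_intg[OF int_AtA g_H]; measurable)+
  have ce_Q: "AE \<omega> in M. g i j \<omega> * real_cond_exp M F_xA1 (\<lambda>\<omega>. AtA \<omega> $ i $ j) \<omega> = g i j \<omega> * Q \<omega> $ i $ j" for i j
    using cond_exp_F_xA1_AtA[of i j] by eventually_elim simp
  have int_Q: "integrable M (\<lambda>\<omega>. g i j \<omega> * Q \<omega> $ i $ j)" for i j
    using integrable_cong_AE[OF _ _ ce_Q] ce(1) by simp
  have eq_Q: "(\<integral>\<omega>. g i j \<omega> * Q \<omega> $ i $ j \<partial>M) = (\<integral>\<omega>. g i j \<omega> * AtA \<omega> $ i $ j \<partial>M)" for i j
    using integral_cong_AE[OF _ _ ce_Q] ce(2) by simp
  have expand_A: "(norm (A \<omega> *v \<phi> \<omega>))\<^sup>2 = (\<Sum>i\<in>UNIV. \<Sum>j\<in>UNIV. g i j \<omega> * AtA \<omega> $ i $ j)" for \<omega>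
    by (simp add: power2_norm_eq_inner inner_matrix_vector_mult_same quadratic_form_expand g_def)
  have expand_Q: "\<phi> \<omega> \<bullet> (Q \<omega> *v \<phi> \<omega>) = (\<Sum>i\<in>UNIV. \<Sum>j\<in>UNIV. g i j \<omega> * Q \<omega> $ i $ j)" for \<omega>
    by (simp add: quadratic_form_expand g_def)
  show "integrable M (\<lambda>\<omega>. (norm (A \<omega> *v \<phi> \<omega>))\<^sup>2)"
    unfolding expand_A by (intro Bochner_Integration.integrable_sum int_AtA)
  show "integrable M (\<lambda>\<omega>. \<phi> \<omega> \<bullet> (Q \<omega> *v \<phi> \<omega>))"
    unfolding expand_Q by (intro Bochner_Integration.integrable_sum int_Q)
  show "(\<integral>\<omega>. (norm (A \<omega> *v \<phi> \<omega>))\<^sup>2 \<partial>M) = (\<integral>\<omega>. \<phi> \<omega> \<bullet> (Q \<omega> *v \<phi> \<omega>) \<partial>M)"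
    unfolding expand_A expand_Q by (simp add: Bochner_Integration.integral_sum int_AtA int_Q eq_Q)
qed

lemma nn_integral_norm_A_square:
  assumes \<phi>: "\<phi> \<in> borel_measurable F_xA1"
  shows "(\<integral>\<^sup>+\<omega>. ennreal ((norm (A \<omega> *v \<phi> \<omega>))\<^sup>2) \<partial>M) = (\<integral>\<^sup>+\<omega>. ennreal (\<phi> \<omega> \<bullet> (Q \<omega> *v \<phi> \<omega>)) \<partial>M)"
proof -
  have [measurable]: "\<phi> \<in> borel_measurable M"
    by (rule measurable_from_subalg[OF sigma_finite_subalgebra.subalg[OF sigma_finite_F_xA1] \<phi>])
  define \<phi>c where "\<phi>c c \<omega> = (if norm (\<phi> \<omega>) \<le> real c then \<phi> \<omega> else 0)" for c :: nat and \<omega>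
  have \<phi>c_H: "\<phi>c c \<in> borel_measurable F_xA1" for c
    unfolding \<phi>c_def using \<phi> by measurable
  have truncated: "(\<integral>\<^sup>+\<omega>. ennreal (if norm (\<phi> \<omega>) \<le> real c then (norm (A \<omega> *v \<phi> \<omega>))\<^sup>2 else 0) \<partial>M)
      = (\<integral>\<^sup>+\<omega>. ennreal (if norm (\<phi> \<omega>) \<le> real c then \<phi> \<omega> \<bullet> (Q \<omega> *v \<phi> \<omega>) else 0) \<partial>M)" for c
  proof -
    have "norm (\<phi>c c \<omega>) \<le> real c" for \<omega> by (simp add: \<phi>c_def)
    note bounded = integral_norm_A_square_bounded[OF \<phi>c_H this]
    have "(\<integral>\<^sup>+\<omega>. ennreal ((norm (A \<omega> *v \<phi>c c \<omega>))\<^sup>2) \<partial>M) = ennreal (\<integral>\<omega>. (norm (A \<omega> *v \<phi>c c \<omega>))\<^sup>2 \<partial>M)"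
      using bounded(1) by (rule nn_integral_eq_integral) (auto simp: \<phi>c_def)
    also have "\<dots> = ennreal (\<integral>\<omega>. \<phi>c c \<omega> \<bullet> (Q \<omega> *v \<phi>c c \<omega>) \<partial>M)"
      by (simp add: bounded(3))
    also have "\<dots> = (\<integral>\<^sup>+\<omega>. ennreal (\<phi>c c \<omega> \<bullet> (Q \<omega> *v \<phi>c c \<omega>)) \<partial>M)"
      by (rule nn_integral_eq_integral[symmetric, OF bounded(2) Q_form_nonneg])
    moreover have "(norm (A \<omega> *v \<phi>c c \<omega>))\<^sup>2 = (if norm (\<phi> \<omega>) \<le> real c then (norm (A \<omega> *v \<phi> \<omega>))\<^sup>2 else 0)"
      and "\<phi>c c \<omega> \<bullet> (Q \<omega> *v \<phi>c c \<omega>) = (if norm (\<phi> \<omega>) \<le> real c then \<phi> \<omega> \<bullet> (Q \<omega> *v \<phi> \<omega>) else 0)" for \<omega>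
      by (simp_all add: \<phi>c_def)
    ultimately show ?thesis by simp
  qed
  show ?thesis
    by (simp add: nn_integral_truncate_SUP[where t="\<lambda>\<omega>. norm (\<phi> \<omega>)"] truncated)
qed

lemma integral_norm_A_square:
  assumes \<phi>: "\<phi> \<in> borel_measurable F_xA1" and int: "integrable M (\<lambda>\<omega>. (norm (A \<omega> *v \<phi> \<omega>))\<^sup>2)"
  shows "integrable M (\<lambda>\<omega>. \<phi> \<omega> \<bullet> (Q \<omega> *v \<phi> \<omega>))"
    and "(\<integral>\<omega>. (norm (A \<omega> *v \<phi> \<omega>))\<^sup>2 \<partial>M) = (\<integral>\<omega>. \<phi> \<omega> \<bullet> (Q \<omega> *v \<phi> \<omega>) \<partial>M)"
proof -
  have [measurable]: "\<phi> \<in> borel_measurable M"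
    by (rule measurable_from_subalg[OF sigma_finite_subalgebra.subalg[OF sigma_finite_F_xA1] \<phi>])
  have nn: "(\<integral>\<^sup>+\<omega>. ennreal (\<phi> \<omega> \<bullet> (Q \<omega> *v \<phi> \<omega>)) \<partial>M) = ennreal (\<integral>\<omega>. (norm (A \<omega> *v \<phi> \<omega>))\<^sup>2 \<partial>M)"
    using nn_integral_norm_A_square[OF \<phi>] nn_integral_eq_integral[OF int] by simp
  show int_Q: "integrable M (\<lambda>\<omega>. \<phi> \<omega> \<bullet> (Q \<omega> *v \<phi> \<omega>))"
    using Q_form_nonneg nn by (intro integrableI_nonneg) auto
  have "ennreal (\<integral>\<omega>. \<phi> \<omega> \<bullet> (Q \<omega> *v \<phi> \<omega>) \<partial>M) = ennreal (\<integral>\<omega>. (norm (A \<omega> *v \<phi> \<omega>))\<^sup>2 \<partial>M)"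
    using nn_integral_eq_integral[OF int_Q Q_form_nonneg] nn by simp
  moreover have "0 \<le> (\<integral>\<omega>. \<phi> \<omega> \<bullet> (Q \<omega> *v \<phi> \<omega>) \<partial>M)"
    by (rule integral_nonneg_AE[OF Q_form_nonneg])
  ultimately show "(\<integral>\<omega>. (norm (A \<omega> *v \<phi> \<omega>))\<^sup>2 \<partial>M) = (\<integral>\<omega>. \<phi> \<omega> \<bullet> (Q \<omega> *v \<phi> \<omega>) \<partial>M)"
    by simp
qed

lemma integrable_norm_A_x_square: "integrable M (\<lambda>\<omega>. (norm (A \<omega> *v x \<omega>))\<^sup>2)"
proof (rule integrableI_bounded)
  define C where "C = real CARD('n) * real CARD('n)"
  have "(norm (A \<omega> *v x \<omega>))\<^sup>2 \<le> C * ((norm (x \<omega>))\<^sup>2 * norm (AtA \<omega>))" for \<omega>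
  proof -
    have "(norm (A \<omega> *v x \<omega>))\<^sup>2 = x \<omega> \<bullet> (AtA \<omega> *v x \<omega>)"
      by (simp add: power2_norm_eq_inner inner_matrix_vector_mult_same)
    also have "\<dots> \<le> norm (x \<omega>) * norm (AtA \<omega> *v x \<omega>)" by (rule norm_cauchy_schwarz)
    also have "\<dots> \<le> norm (x \<omega>) * (C * norm (AtA \<omega>) * norm (x \<omega>))"
      unfolding C_def by (intro mult_left_mono norm_matrix_vector_mult_le) simp
    finally show ?thesis by (simp add: power2_eq_square mult_ac)
  qed
  then have "(\<integral>\<^sup>+\<omega>. ennreal (norm ((norm (A \<omega> *v x \<omega>))\<^sup>2)) \<partial>M)
      \<le> (\<integral>\<^sup>+\<omega>. ennreal C * (ennreal ((norm (x \<omega>))\<^sup>2) * ennreal (norm (AtA \<omega>))) \<partial>M)"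
    by (intro nn_integral_mono) (simp add: ennreal_mult[symmetric] C_def)
  also have "\<dots> = ennreal C * ((\<integral>\<^sup>+\<omega>. ennreal ((norm (x \<omega>))\<^sup>2) \<partial>M) * (\<integral>\<^sup>+\<omega>. ennreal (norm (AtA \<omega>)) \<partial>M))"
    using nn_integral_indep_rv_mult[OF x_meas A_meas indep_x_A,
        of "\<lambda>\<xi>. ennreal ((norm \<xi>)\<^sup>2)" "\<lambda>a. ennreal (norm (transpose a ** a))"]
    by (simp add: nn_integral_cmult)
  also have "\<dots> < \<infinity>"
    using nn_integral_eq_integral[OF x_square_int] nn_integral_eq_integral[OF AtA_int]
    by (simp add: ennreal_mult_less_top ennreal_mult[symmetric])
  finally show "(\<integral>\<^sup>+\<omega>. ennreal (norm ((norm (A \<omega> *v x \<omega>))\<^sup>2)) \<partial>M) < \<infinity>" .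
qed measurable

lemma x_hat_meas_F_xA1: "x_hat \<in> borel_measurable F_xA1"
  by (rule measurable_F_obs_F_xA1[OF x_hat_meas_F_obs])

lemma integral_inner_x_hat_residual:
  assumes g: "g \<in> borel_measurable (F_obs M x A S)" and bound: "\<And>\<omega>. \<omega> \<in> space M \<Longrightarrow> norm (g \<omega>) \<le> c"
  shows "integrable M (\<lambda>\<omega>. g \<omega> \<bullet> (x_hat \<omega> - x \<omega>))" and "(\<integral>\<omega>. g \<omega> \<bullet> (x_hat \<omega> - x \<omega>) \<partial>M) = 0"
proof -
  interpret Ob: sigma_finite_subalgebra M "F_obs M x A S" by (rule sigma_finite_F_obs)
  note orth = Ob.integral_inner_vcond_exp[OF integrable_x_component g bound]
  show "integrable M (\<lambda>\<omega>. g \<omega> \<bullet> (x_hat \<omega> - x \<omega>))"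
    using orth by (simp add: inner_diff_right)
  show "(\<integral>\<omega>. g \<omega> \<bullet> (x_hat \<omega> - x \<omega>) \<partial>M) = 0"
    using orth by (simp add: inner_diff_right)
qed

text \<open>Pythagoras for the \<open>Q\<close>-form on an observable event \<open>T\<close>: there
  \<open>E (x_hat - x)\<^sup>T Q (x_hat - x) = E x\<^sup>T Q x - E x_hat\<^sup>T Q x_hat\<close>, because \<open>Q x_hat\<close> is
  a function of the observation. The bounds on \<open>T\<close> make every term integrable.\<close>
lemma integral_Q_form_residual_on_event:
  assumes T_Ob: "Measurable.pred (F_obs M x A S) T"
    and T_bound: "\<And>\<omega>. T \<omega> \<Longrightarrow> norm (Q \<omega>) \<le> c \<and> norm (x_hat \<omega>) \<le> c" and "0 \<le> c"
  shows "integrable M (\<lambda>\<omega>. if T \<omega> then (x_hat \<omega> - x \<omega>) \<bullet> (Q \<omega> *v (x_hat \<omega> - x \<omega>)) else 0)"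
    and "(\<integral>\<omega>. (if T \<omega> then (x_hat \<omega> - x \<omega>) \<bullet> (Q \<omega> *v (x_hat \<omega> - x \<omega>)) else 0) \<partial>M)
      \<le> (\<integral>\<omega>. (norm (A \<omega> *v x \<omega>))\<^sup>2 \<partial>M)"
proof -
  define a where "a \<omega> = (if T \<omega> then x_hat \<omega> else 0)" for \<omega>
  define b where "b \<omega> = (if T \<omega> then x \<omega> else 0)" for \<omega>
  define g where "g \<omega> = (if T \<omega> then Q \<omega> *v x_hat \<omega> else 0)" for \<omega>
  have T_H: "Measurable.pred F_xA1 T" by (rule measurable_F_obs_F_xA1[OF T_Ob])
  have a_H: "a \<in> borel_measurable F_xA1" unfolding a_def using T_H x_hat_meas_F_xA1 by measurable
  have b_H: "b \<in> borel_measurable F_xA1" unfolding b_def using T_H x_meas_F_xA1 by measurable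
  have [measurable]: "b \<in> borel_measurable M"
    by (rule measurable_from_subalg[OF sigma_finite_subalgebra.subalg[OF sigma_finite_F_xA1] b_H])
  have g_Ob: "g \<in> borel_measurable (F_obs M x A S)"
    unfolding g_def using T_Ob Q_meas_F_obs x_hat_meas_F_obs by measurable
  have g_bound: "norm (g \<omega>) \<le> real CARD('n) * real CARD('n) * (c * c)" for \<omega>
  proof (cases "T \<omega>")
    case True
    then have "norm (Q \<omega>) * norm (x_hat \<omega>) \<le> c * c"
      using T_bound \<open>0 \<le> c\<close> by (intro mult_mono) auto
    then have "real CARD('n) * real CARD('n) * norm (Q \<omega>) * norm (x_hat \<omega>)
        \<le> real CARD('n) * real CARD('n) * (c * c)"
      by (simp add: mult.assoc mult_left_mono)
    with True show ?thesis by (simp add: g_def order_trans[OF norm_matrix_vector_mult_le])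
  qed (simp add: g_def)
  have int_b: "integrable M (\<lambda>\<omega>. (norm (A \<omega> *v b \<omega>))\<^sup>2)"
  proof (rule Bochner_Integration.integrable_bound[OF integrable_norm_A_x_square])
    show "AE \<omega> in M. norm ((norm (A \<omega> *v b \<omega>))\<^sup>2) \<le> norm ((norm (A \<omega> *v x \<omega>))\<^sup>2)"
      by (auto simp: b_def)
  qed measurable
  note b_form = integral_norm_A_square[OF b_H int_b]
  have "norm (a \<omega>) \<le> c" for \<omega>
    using T_bound \<open>0 \<le> c\<close> by (auto simp: a_def)
  note a_form = integral_norm_A_square_bounded(2)[OF a_H this]
  note g_orth = integral_inner_x_hat_residual[OF g_Ob g_bound]
  have split: "(if T \<omega> then (x_hat \<omega> - x \<omega>) \<bullet> (Q \<omega> *v (x_hat \<omega> - x \<omega>)) else 0)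
      = b \<omega> \<bullet> (Q \<omega> *v b \<omega>) - a \<omega> \<bullet> (Q \<omega> *v a \<omega>) + 2 * (g \<omega> \<bullet> (x_hat \<omega> - x \<omega>))" for \<omega>
    by (simp add: a_def b_def g_def quadratic_form_diff_alt[OF Q_symmetric])
  show "integrable M (\<lambda>\<omega>. if T \<omega> then (x_hat \<omega> - x \<omega>) \<bullet> (Q \<omega> *v (x_hat \<omega> - x \<omega>)) else 0)"
    unfolding split using b_form(1) a_form g_orth(1) by simp
  have "(\<integral>\<omega>. b \<omega> \<bullet> (Q \<omega> *v b \<omega>) - a \<omega> \<bullet> (Q \<omega> *v a \<omega>) + 2 * (g \<omega> \<bullet> (x_hat \<omega> - x \<omega>)) \<partial>M)
      = (\<integral>\<omega>. b \<omega> \<bullet> (Q \<omega> *v b \<omega>) \<partial>M) - (\<integral>\<omega>. a \<omega> \<bullet> (Q \<omega> *v a \<omega>) \<partial>M)"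
    using b_form(1) a_form g_orth by simp
  also have "\<dots> \<le> (\<integral>\<omega>. (norm (A \<omega> *v b \<omega>))\<^sup>2 \<partial>M)"
    using b_form(2) integral_nonneg_AE[OF Q_form_nonneg[of a]] by simp
  also have "\<dots> \<le> (\<integral>\<omega>. (norm (A \<omega> *v x \<omega>))\<^sup>2 \<partial>M)"
    by (intro integral_mono int_b integrable_norm_A_x_square) (simp add: b_def)
  finally show "(\<integral>\<omega>. (if T \<omega> then (x_hat \<omega> - x \<omega>) \<bullet> (Q \<omega> *v (x_hat \<omega> - x \<omega>)) else 0) \<partial>M)
      \<le> (\<integral>\<omega>. (norm (A \<omega> *v x \<omega>))\<^sup>2 \<partial>M)"
    unfolding split .
qed

lemma integrable_norm_A_residual_square: "integrable M (\<lambda>\<omega>. (norm (A \<omega> *v (x_hat \<omega> - x \<omega>)))\<^sup>2)"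
proof (rule integrableI_bounded)
  have r_H: "(\<lambda>\<omega>. x_hat \<omega> - x \<omega>) \<in> borel_measurable F_xA1"
    using x_hat_meas_F_xA1 x_meas_F_xA1 by measurable
  have "(\<integral>\<^sup>+\<omega>. ennreal (norm ((norm (A \<omega> *v (x_hat \<omega> - x \<omega>)))\<^sup>2)) \<partial>M)
      = (\<integral>\<^sup>+\<omega>. ennreal ((x_hat \<omega> - x \<omega>) \<bullet> (Q \<omega> *v (x_hat \<omega> - x \<omega>))) \<partial>M)"
    using nn_integral_norm_A_square[OF r_H] by simp
  also have "\<dots> = (SUP c::nat. \<integral>\<^sup>+\<omega>. ennreal (if max (norm (Q \<omega>)) (norm (x_hat \<omega>)) \<le> real c
      then (x_hat \<omega> - x \<omega>) \<bullet> (Q \<omega> *v (x_hat \<omega> - x \<omega>)) else 0) \<partial>M)"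
    by (rule nn_integral_truncate_SUP) measurable
  also have "\<dots> \<le> ennreal (\<integral>\<omega>. (norm (A \<omega> *v x \<omega>))\<^sup>2 \<partial>M)"
  proof (rule SUP_least)
    fix c :: nat
    have "Measurable.pred (F_obs M x A S) (\<lambda>\<omega>. max (norm (Q \<omega>)) (norm (x_hat \<omega>)) \<le> real c)"
      using Q_meas_F_obs x_hat_meas_F_obs by measurable
    note on_event = integral_Q_form_residual_on_event[OF this _ of_nat_0_le_iff]
    show "(\<integral>\<^sup>+\<omega>. ennreal (if max (norm (Q \<omega>)) (norm (x_hat \<omega>)) \<le> real c
        then (x_hat \<omega> - x \<omega>) \<bullet> (Q \<omega> *v (x_hat \<omega> - x \<omega>)) else 0) \<partial>M)
      \<le> ennreal (\<integral>\<omega>. (norm (A \<omega> *v x \<omega>))\<^sup>2 \<partial>M)"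
      using on_event Q_form_nonneg[of "\<lambda>\<omega>. x_hat \<omega> - x \<omega>"]
      by (subst nn_integral_eq_integral) (auto elim!: AE_mp intro: ennreal_leI)
  qed
  also have "\<dots> < \<infinity>" by simp
  finally show "(\<integral>\<^sup>+\<omega>. ennreal (norm ((norm (A \<omega> *v (x_hat \<omega> - x \<omega>)))\<^sup>2)) \<partial>M) < \<infinity>" .
qed measurable

lemma integral_Q_cross_residual:
  assumes u_Ob: "u \<in> borel_measurable (F_obs M x A S)" and u_int: "integrable M (\<lambda>\<omega>. u \<omega> \<bullet> (Q \<omega> *v u \<omega>))"
  shows "integrable M (\<lambda>\<omega>. u \<omega> \<bullet> (Q \<omega> *v (x_hat \<omega> - x \<omega>)))"
    and "(\<integral>\<omega>. u \<omega> \<bullet> (Q \<omega> *v (x_hat \<omega> - x \<omega>)) \<partial>M) = 0"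
proof -
  have [measurable]: "u \<in> borel_measurable M"
    by (rule measurable_from_subalg[OF sigma_finite_subalgebra.subalg[OF sigma_finite_F_obs] u_Ob])
  have r_H: "(\<lambda>\<omega>. x_hat \<omega> - x \<omega>) \<in> borel_measurable F_xA1"
    using x_hat_meas_F_xA1 x_meas_F_xA1 by measurable
  have r_int: "integrable M (\<lambda>\<omega>. (x_hat \<omega> - x \<omega>) \<bullet> (Q \<omega> *v (x_hat \<omega> - x \<omega>)))"
    by (rule integral_norm_A_square(1)[OF r_H integrable_norm_A_residual_square])
  define g where "g c \<omega> = (if norm (Q \<omega> *v u \<omega>) \<le> real c then Q \<omega> *v u \<omega> else 0)" for c :: nat and \<omega>
  have g_Ob: "g c \<in> borel_measurable (F_obs M x A S)" for c
    unfolding g_def using Q_meas_F_obs u_Ob by measurable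
  have g_bound: "norm (g c \<omega>) \<le> real c" for c \<omega> by (simp add: g_def)
  note orth = integral_inner_x_hat_residual[OF g_Ob g_bound]
  have [measurable]: "g c \<in> borel_measurable M" for c unfolding g_def by measurable
  define B where "B \<omega> = (u \<omega> \<bullet> (Q \<omega> *v u \<omega>) + (x_hat \<omega> - x \<omega>) \<bullet> (Q \<omega> *v (x_hat \<omega> - x \<omega>))) / 2" for \<omega>
  have B_int: "integrable M B" unfolding B_def using u_int r_int by simp
  have symm: "(Q \<omega> *v u \<omega>) \<bullet> v = u \<omega> \<bullet> (Q \<omega> *v v)" for \<omega> v
    by (simp add: inner_matrix_vector_symmetric[OF Q_symmetric])
  have lim: "AE \<omega> in M. (\<lambda>c. g c \<omega> \<bullet> (x_hat \<omega> - x \<omega>)) \<longlonglongrightarrow> u \<omega> \<bullet> (Q \<omega> *v (x_hat \<omega> - x \<omega>))"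
  proof (intro AE_I2 tendsto_eventually eventually_sequentiallyI)
    fix \<omega> and c :: nat assume "nat \<lceil>norm (Q \<omega> *v u \<omega>)\<rceil> \<le> c"
    then have "norm (Q \<omega> *v u \<omega>) \<le> real c" by linarith
    then show "g c \<omega> \<bullet> (x_hat \<omega> - x \<omega>) = u \<omega> \<bullet> (Q \<omega> *v (x_hat \<omega> - x \<omega>))" by (simp add: g_def symm)
  qed
  have dom: "AE \<omega> in M. norm (g c \<omega> \<bullet> (x_hat \<omega> - x \<omega>)) \<le> B \<omega>" for c
    using Q_psd
  proof eventually_elim
    case (elim \<omega>)
    have "\<bar>u \<omega> \<bullet> (Q \<omega> *v (x_hat \<omega> - x \<omega>))\<bar> \<le> B \<omega>"
      unfolding B_def using elim by (intro psd_bilinear_form_le[OF Q_symmetric]) blast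
    then show ?case by (auto simp: g_def symm)
  qed
  show "integrable M (\<lambda>\<omega>. u \<omega> \<bullet> (Q \<omega> *v (x_hat \<omega> - x \<omega>)))"
    by (rule integrable_dominated_convergence[OF _ _ B_int lim dom]) measurable
  have "(\<lambda>c. \<integral>\<omega>. g c \<omega> \<bullet> (x_hat \<omega> - x \<omega>) \<partial>M) \<longlonglongrightarrow> (\<integral>\<omega>. u \<omega> \<bullet> (Q \<omega> *v (x_hat \<omega> - x \<omega>)) \<partial>M)"
    by (rule integral_dominated_convergence[OF _ _ B_int lim dom]) measurable
  then show "(\<integral>\<omega>. u \<omega> \<bullet> (Q \<omega> *v (x_hat \<omega> - x \<omega>)) \<partial>M) = 0"
    using orth(2) by (simp add: LIMSEQ_const_iff)
qed

lemma integral_norm_A_error_decomposition: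
  assumes adm: "admissible M x A S f"
  shows "integrable M (\<lambda>\<omega>. (f (obs x A S \<omega>) - x_hat \<omega>) \<bullet> (Q \<omega> *v (f (obs x A S \<omega>) - x_hat \<omega>)))"
    and "(\<integral>\<omega>. (norm (A \<omega> *v f (obs x A S \<omega>) - A \<omega> *v x \<omega>))\<^sup>2 \<partial>M)
      = (\<integral>\<omega>. (f (obs x A S \<omega>) - x_hat \<omega>) \<bullet> (Q \<omega> *v (f (obs x A S \<omega>) - x_hat \<omega>)) \<partial>M)
        + (\<integral>\<omega>. (x_hat \<omega> - x \<omega>) \<bullet> (Q \<omega> *v (x_hat \<omega> - x \<omega>)) \<partial>M)"
proof -
  have [measurable]: "f \<in> borel_measurable obs_space" using adm by (simp add: admissible_def)
  define u where "u \<omega> = f (obs x A S \<omega>) - x_hat \<omega>" for \<omega>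
  define r where "r \<omega> = x_hat \<omega> - x \<omega>" for \<omega>
  have u_Ob: "u \<in> borel_measurable (F_obs M x A S)"
    unfolding u_def using obs_comp_meas_F_obs[of f] x_hat_meas_F_obs by measurable
  have u_H: "u \<in> borel_measurable F_xA1" by (rule measurable_F_obs_F_xA1[OF u_Ob])
  have r_H: "r \<in> borel_measurable F_xA1" unfolding r_def using x_hat_meas_F_xA1 x_meas_F_xA1 by measurable
  have ur_H: "(\<lambda>\<omega>. u \<omega> + r \<omega>) \<in> borel_measurable F_xA1" using u_H r_H by measurable
  have [measurable]: "u \<in> borel_measurable M" "r \<in> borel_measurable M" unfolding u_def r_def by measurable
  have Aur: "A \<omega> *v f (obs x A S \<omega>) - A \<omega> *v x \<omega> = A \<omega> *v (u \<omega> + r \<omega>)" for \<omega>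
    by (simp add: u_def r_def matrix_vector_mult_diff_distrib)
  have int_ur: "integrable M (\<lambda>\<omega>. (norm (A \<omega> *v (u \<omega> + r \<omega>)))\<^sup>2)"
    using adm by (simp add: admissible_def Aur)
  have int_r: "integrable M (\<lambda>\<omega>. (norm (A \<omega> *v r \<omega>))\<^sup>2)"
    unfolding r_def by (rule integrable_norm_A_residual_square)
  have int_u: "integrable M (\<lambda>\<omega>. (norm (A \<omega> *v u \<omega>))\<^sup>2)"
    using integrable_norm_square_diff[OF _ _ int_ur int_r] by (simp add: matrix_vector_right_distrib)
  note u_form = integral_norm_A_square[OF u_H int_u]
  note r_form = integral_norm_A_square[OF r_H int_r]
  note ur_form = integral_norm_A_square[OF ur_H int_ur]
  note cross = integral_Q_cross_residual[OF u_Ob u_form(1), folded r_def]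
  show "integrable M (\<lambda>\<omega>. (f (obs x A S \<omega>) - x_hat \<omega>) \<bullet> (Q \<omega> *v (f (obs x A S \<omega>) - x_hat \<omega>)))"
    using u_form(1) by (simp add: u_def)
  have "(\<integral>\<omega>. (norm (A \<omega> *v f (obs x A S \<omega>) - A \<omega> *v x \<omega>))\<^sup>2 \<partial>M)
      = (\<integral>\<omega>. (u \<omega> + r \<omega>) \<bullet> (Q \<omega> *v (u \<omega> + r \<omega>)) \<partial>M)"
    by (simp add: Aur ur_form(2))
  also have "\<dots> = (\<integral>\<omega>. u \<omega> \<bullet> (Q \<omega> *v u \<omega>) \<partial>M) + (\<integral>\<omega>. r \<omega> \<bullet> (Q \<omega> *v r \<omega>) \<partial>M)"
    using u_form(1) r_form(1) cross by (simp add: quadratic_form_add[OF Q_symmetric])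
  finally show "(\<integral>\<omega>. (norm (A \<omega> *v f (obs x A S \<omega>) - A \<omega> *v x \<omega>))\<^sup>2 \<partial>M)
      = (\<integral>\<omega>. (f (obs x A S \<omega>) - x_hat \<omega>) \<bullet> (Q \<omega> *v (f (obs x A S \<omega>) - x_hat \<omega>)) \<partial>M)
        + (\<integral>\<omega>. (x_hat \<omega> - x \<omega>) \<bullet> (Q \<omega> *v (x_hat \<omega> - x \<omega>)) \<partial>M)"
    by (simp add: u_def r_def)
qed

lemma exp_msplit_loss_eq_integral:
  assumes adm: "admissible M x A S f"
  shows "exp_msplit_loss M x A S f
    = (1 / real CARD('m)) * (\<integral>\<omega>. (norm (A \<omega> *v f (obs x A S \<omega>) - A \<omega> *v x \<omega>))\<^sup>2 \<partial>M)"
proof -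
  have "(\<lambda>\<omega>. (A \<omega> *v x \<omega>, A \<omega>)) \<in> borel_measurable M"
    by (simp add: borel_prod[symmetric])
  then interpret Y: sigma_finite_subalgebra M "F_yA M x A"
    unfolding F_yA_def gen_sigma_def by (rule sigma_finite_subalgebra_vimage_algebra)
  show ?thesis
    using Y.real_cond_exp_int(2)[of "\<lambda>\<omega>. 1 / real CARD('m) * (norm (A \<omega> *v f (obs x A S \<omega>) - A \<omega> *v x \<omega>))\<^sup>2"] adm
    by (simp add: exp_msplit_loss_def msplit_loss_def admissible_def)
qed

lemma exp_msplit_loss_eq_Q_form:
  assumes adm: "admissible M x A S f"
  shows "exp_msplit_loss M x A S f = (\<integral>\<omega>. (1 / real CARD('m)) *
    ((f (obs x A S \<omega>) - x \<omega>) \<bullet> (Q \<omega> *v (f (obs x A S \<omega>) - x \<omega>))) \<partial>M)"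
proof -
  have [measurable]: "f \<in> borel_measurable obs_space" using adm by (simp add: admissible_def)
  have "(\<lambda>\<omega>. f (obs x A S \<omega>)) \<in> borel_measurable F_xA1"
    by (intro measurable_F_obs_F_xA1 obs_comp_meas_F_obs) measurable
  then have \<phi>_H: "(\<lambda>\<omega>. f (obs x A S \<omega>) - x \<omega>) \<in> borel_measurable F_xA1"
    using x_meas_F_xA1 by measurable
  have \<phi>_int: "integrable M (\<lambda>\<omega>. (norm (A \<omega> *v (f (obs x A S \<omega>) - x \<omega>)))\<^sup>2)"
    using adm by (simp add: admissible_def matrix_vector_mult_diff_distrib)
  have "exp_msplit_loss M x A S f
      = (1 / real CARD('m)) * (\<integral>\<omega>. (norm (A \<omega> *v (f (obs x A S \<omega>) - x \<omega>)))\<^sup>2 \<partial>M)"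
    using exp_msplit_loss_eq_integral[OF adm] by (simp add: matrix_vector_mult_diff_distrib)
  also have "\<dots> = (1 / real CARD('m)) *
      (\<integral>\<omega>. (f (obs x A S \<omega>) - x \<omega>) \<bullet> (Q \<omega> *v (f (obs x A S \<omega>) - x \<omega>)) \<partial>M)"
    by (simp only: integral_norm_A_square(2)[OF \<phi>_H \<phi>_int])
  finally show ?thesis by simp
qed

lemma admissible_x_hat_factor:
  obtains h where "admissible M x A S h" "\<And>\<omega>. \<omega> \<in> space M \<Longrightarrow> x_hat \<omega> = h (obs x A S \<omega>)"
proof -
  interpret Ob: sigma_finite_subalgebra M "F_obs M x A S" by (rule sigma_finite_F_obs)
  have "\<exists>h\<in>borel_measurable obs_space. \<forall>\<omega>\<in>space M. g \<omega> = h (obs x A S \<omega>)"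
    if "g \<in> borel_measurable (F_obs M x A S)" for g :: "'w \<Rightarrow> real^'n"
    using that measurable_space[OF obs_meas] unfolding F_obs_def gen_sigma_def
    by (intro vimage_algebra_factorization) auto
  then obtain h where h_meas: "h \<in> borel_measurable obs_space"
    and h: "\<And>\<omega>. \<omega> \<in> space M \<Longrightarrow> x_hat \<omega> = h (obs x A S \<omega>)"
    using x_hat_meas_F_obs by blast
  have adm: "admissible M x A S h"
    unfolding admissible_def
  proof (intro conjI h_meas)
    show "integrable M (\<lambda>\<omega>. (norm (h (obs x A S \<omega>)))\<^sup>2)"
      using Ob.integrable_norm_vcond_exp_square[OF integrable_x_component x_square_int]
      by (rule Bochner_Integration.integrable_cong[THEN iffD1, rotated 2]) (auto simp: h)
    show "integrable M (\<lambda>\<omega>. (norm (A \<omega> *v h (obs x A S \<omega>) - A \<omega> *v x \<omega>))\<^sup>2)"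
      using integrable_norm_A_residual_square
      by (rule Bochner_Integration.integrable_cong[THEN iffD1, rotated 2])
         (auto simp: h matrix_vector_mult_diff_distrib)
  qed
  show thesis by (rule that[OF adm h])
qed

lemma is_global_minimizer_iff_Q_kernel:
  assumes adm: "admissible M x A S f"
  shows "is_global_minimizer M x A S f \<longleftrightarrow> (AE \<omega> in M. Q \<omega> *v (f (obs x A S \<omega>) - x_hat \<omega>) = 0)"
proof -
  let ?I = "\<lambda>f. \<integral>\<omega>. (f (obs x A S \<omega>) - x_hat \<omega>) \<bullet> (Q \<omega> *v (f (obs x A S \<omega>) - x_hat \<omega>)) \<partial>M"
  let ?C = "\<integral>\<omega>. (x_hat \<omega> - x \<omega>) \<bullet> (Q \<omega> *v (x_hat \<omega> - x \<omega>)) \<partial>M"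
  have loss: "exp_msplit_loss M x A S g = (1 / real CARD('m)) * (?I g + ?C)" if "admissible M x A S g" for g
    using exp_msplit_loss_eq_integral[OF that] integral_norm_A_error_decomposition(2)[OF that] by simp
  have I_nonneg: "0 \<le> ?I g" for g by (rule integral_nonneg_AE[OF Q_form_nonneg])
  obtain h where h_adm: "admissible M x A S h" and h: "\<And>\<omega>. \<omega> \<in> space M \<Longrightarrow> x_hat \<omega> = h (obs x A S \<omega>)"
    using admissible_x_hat_factor by blast
  have "?I h = 0" by (simp add: h cong: Bochner_Integration.integral_cong)
  have "is_global_minimizer M x A S f \<longleftrightarrow> ?I f = 0"
  proof
    assume "is_global_minimizer M x A S f"
    then have "exp_msplit_loss M x A S f \<le> exp_msplit_loss M x A S h"
      using h_adm by (simp add: is_global_minimizer_def)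
    then have "?I f \<le> ?I h" by (simp add: loss adm h_adm divide_le_cancel)
    then show "?I f = 0" using \<open>?I h = 0\<close> I_nonneg[of f] by simp
  next
    assume "?I f = 0"
    then show "is_global_minimizer M x A S f"
      unfolding is_global_minimizer_def using adm I_nonneg by (auto simp: loss intro!: divide_right_mono)
  qed
  also have "\<dots> \<longleftrightarrow> (AE \<omega> in M. (f (obs x A S \<omega>) - x_hat \<omega>) \<bullet> (Q \<omega> *v (f (obs x A S \<omega>) - x_hat \<omega>)) = 0)"
    by (rule integral_nonneg_eq_0_iff_AE[OF integral_norm_A_error_decomposition(1)[OF adm] Q_form_nonneg])
  also have "\<dots> \<longleftrightarrow> (AE \<omega> in M. Q \<omega> *v (f (obs x A S \<omega>) - x_hat \<omega>) = 0)"
  proof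
    assume "AE \<omega> in M. (f (obs x A S \<omega>) - x_hat \<omega>) \<bullet> (Q \<omega> *v (f (obs x A S \<omega>) - x_hat \<omega>)) = 0"
    with Q_psd show "AE \<omega> in M. Q \<omega> *v (f (obs x A S \<omega>) - x_hat \<omega>) = 0"
      by eventually_elim (blast intro: psd_quadratic_form_eq_0_imp[OF Q_symmetric])
  qed (auto elim!: AE_mp)
  finally show ?thesis .
qed

lemma is_global_minimizer_iff_mp_pinv_form:
  assumes adm: "admissible M x A S f"
  shows "is_global_minimizer M x A S f \<longleftrightarrow>
    (\<exists>v :: 'm set \<times> ((real^'m) \<times> (real^'n^'m)) \<Rightarrow> real^'n. AE \<omega> in M. f (obs x A S \<omega>) =
      (mp_pinv (Q \<omega>) ** Q \<omega>) *v x_hat \<omega> + (mat 1 - mp_pinv (Q \<omega>) ** Q \<omega>) *v v (obs x A S \<omega>))"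
  unfolding is_global_minimizer_iff_Q_kernel[OF adm]
proof
  assume "AE \<omega> in M. Q \<omega> *v (f (obs x A S \<omega>) - x_hat \<omega>) = 0"
  then show "\<exists>v. AE \<omega> in M. f (obs x A S \<omega>) =
      (mp_pinv (Q \<omega>) ** Q \<omega>) *v x_hat \<omega> + (mat 1 - mp_pinv (Q \<omega>) ** Q \<omega>) *v v (obs x A S \<omega>)"
    by (intro exI[of _ f]) (auto elim!: AE_mp intro: mp_pinv_form_of_kernel[OF Q_symmetric])
qed (auto elim!: AE_mp simp: kernel_of_mp_pinv_form[OF Q_symmetric])

lemma is_global_minimizer_iff_x_hat:
  assumes adm: "admissible M x A S f" and inv: "AE \<omega> in M. invertible (Q \<omega>)"
  shows "is_global_minimizer M x A S f \<longleftrightarrow> (AE \<omega> in M. f (obs x A S \<omega>) = x_hat \<omega>)"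
  unfolding is_global_minimizer_iff_mp_pinv_form[OF adm] using inv
  by (auto elim!: AE_mp simp: mp_pinv_invertible[OF Q_symmetric] intro: exI[of _ "\<lambda>_. 0"])

end

theorem mainTheorem8:
  fixes M :: "'w measure" and x :: "'w \<Rightarrow> real^'n" and A :: "'w \<Rightarrow> real^'n^'m"
    and S :: "'w \<Rightarrow> 'm set"
  assumes "prob_space M"
    and "x \<in> borel_measurable M" and "A \<in> borel_measurable M"
    and "S \<in> measurable M (count_space UNIV)"
    and "integrable M (\<lambda>\<omega>. (norm (x \<omega>))\<^sup>2)"
    and "integrable M (\<lambda>\<omega>. norm (transpose (A \<omega>) ** A \<omega>))"
    and "indep_rv M x borel A borel"
    and "cond_indep M S (count_space UNIV) x borel (gen_sigma M A borel)"
  shows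
    "(\<forall>f. admissible M x A S f \<longrightarrow>
        exp_msplit_loss M x A S f =
        (\<integral>\<omega>. (1 / real CARD('m)) *
             ((f (obs x A S \<omega>) - x \<omega>) \<bullet> (Qmat M A S \<omega> *v (f (obs x A S \<omega>) - x \<omega>))) \<partial>M))
   \<and> (\<forall>f. admissible M x A S f \<longrightarrow>
        (is_global_minimizer M x A S f \<longleftrightarrow>
         (\<exists>v :: 'm set \<times> ((real^'m) \<times> (real^'n^'m)) \<Rightarrow> real^'n. AE \<omega> in M.
            f (obs x A S \<omega>) =
              (mp_pinv (Qmat M A S \<omega>) ** Qmat M A S \<omega>) *v vcond_exp M (F_obs M x A S) x \<omega>
            + (mat 1 - mp_pinv (Qmat M A S \<omega>) ** Qmat M A S \<omega>) *v v (obs x A S \<omega>))))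
   \<and> ((AE \<omega> in M. invertible (Qmat M A S \<omega>)) \<longrightarrow>
        (\<forall>f. admissible M x A S f \<longrightarrow>
          (is_global_minimizer M x A S f \<longleftrightarrow>
           (AE \<omega> in M. f (obs x A S \<omega>) = vcond_exp M (F_obs M x A S) x \<omega>))))"
proof -
  interpret msplit_model M x A S by (rule msplit_model.intro[OF assms])
  show ?thesis
    using exp_msplit_loss_eq_Q_form is_global_minimizer_iff_mp_pinv_form is_global_minimizer_iff_x_hat
    by blast
qed

end
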